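(* Let $f:H_0\to H_1$ be an injective homomorphism of free left $\bar k[\sigma]$-modules of finite rank with $n:=\dim_{\bar k}\operatorname{coker}(f)<\infty$. Then $\#\ker\big(f\bmod(\sigma-1)\big)\le q^n$, with equality if and only if $f\bmod\sigma$ is bijective.
   Context: $\bar k$ is the algebraic closure of $k=\mathbb F_q(T)$ (a perfect field). $\bar k[\sigma]$ is the noncommutative polynomial ring over $\bar k$ in $\sigma$ with $\sigma x=x^{q^{-1}}\sigma$ for $x\in\bar k$. For a homomorphism $f:H_0\to H_1$ of left $\bar k[\sigma]$-modules, $f\bmod\sigma:H_0/\sigma H_0\to H_1/\sigma H_1$ and $f\bmod(\sigma-1):H_0/(\sigma-1)H_0\to H_1/(\sigma-1)H_1$ are the induced maps. *)

theory Defs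
  imports "HOL-Algebra.Ring" "HOL-Algebra.AbelCoset" "HOL-Algebra.Module"
          "HOL-Computational_Algebra.Polynomial" "HOL-Computational_Algebra.Primes"
begin

text \<open>The whole type 'a is the field kbar.\<close>

definition Fq :: "nat \<Rightarrow> 'a::field set" where
  "Fq q = {x. x ^ q = x}"

definition FqT :: "nat \<Rightarrow> 'a::field \<Rightarrow> 'a set" where
  "FqT q T = {poly A T / poly B T | A B.
      (\<forall>i. coeff A i \<in> Fq q) \<and> (\<forall>i. coeff B i \<in> Fq q) \<and> poly B T \<noteq> 0}"

definition is_alg_closure_of_FqT :: "nat \<Rightarrow> 'a::field \<Rightarrow> bool" where
  "is_alg_closure_of_FqT q T \<longleftrightarrow>
     (\<exists>p e. prime p \<and> e > 0 \<and> q = p ^ e \<and> CHAR('a) = p)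
   \<and> (\<forall>P :: 'a poly. P \<noteq> 0 \<and> (\<forall>i. coeff P i \<in> Fq q) \<longrightarrow> poly P T \<noteq> 0)
   \<and> (\<forall>P :: 'a poly. degree P > 0 \<longrightarrow> (\<exists>x. poly P x = 0))
   \<and> (\<forall>x::'a. \<exists>P. P \<noteq> 0 \<and> (\<forall>i. coeff P i \<in> FqT q T) \<and> poly P x = 0)"

definition frob_inv :: "nat \<Rightarrow> 'a::field \<Rightarrow> 'a" where
  "frob_inv q x = (THE y. y ^ q = x)"

text \<open>An element sum_i a_i sigma^i is the finitely supported coefficient function a.
 (a sigma^i)(b sigma^j) = a b^(q^-i) sigma^(i+j).\<close>

definition skew_poly_ring :: "nat \<Rightarrow> (nat \<Rightarrow> 'a::field) ring" where
  "skew_poly_ring q = \<lparr>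
     partial_object.carrier = {f. finite {i. f i \<noteq> 0}},
     monoid.mult = (\<lambda>f g n. \<Sum>i\<le>n. f i * (frob_inv q ^^ i) (g (n - i))),
     monoid.one = (\<lambda>n. if n = 0 then 1 else 0),
     ring.zero = (\<lambda>n. 0),
     ring.add = (\<lambda>f g n. f n + g n) \<rparr>"

definition skew_const :: "'a::field \<Rightarrow> nat \<Rightarrow> 'a" where
  "skew_const c = (\<lambda>n. if n = 0 then c else 0)"

definition skew_sigma :: "nat \<Rightarrow> 'a::field" where
  "skew_sigma = (\<lambda>n. if n = 1 then 1 else 0)"

definition left_module :: "('r, 'x) ring_scheme \<Rightarrow> ('r, 'm) module \<Rightarrow> bool" where
  "left_module R M \<longleftrightarrow> ring R \<and> abelian_group M \<and>
    (\<forall>a\<in>carrier R. \<forall>x\<in>carrier M. a \<odot>\<^bsub>M\<^esub> x \<in> carrier M) \<and>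
    (\<forall>a\<in>carrier R. \<forall>b\<in>carrier R. \<forall>x\<in>carrier M.
        (a \<oplus>\<^bsub>R\<^esub> b) \<odot>\<^bsub>M\<^esub> x = a \<odot>\<^bsub>M\<^esub> x \<oplus>\<^bsub>M\<^esub> b \<odot>\<^bsub>M\<^esub> x) \<and>
    (\<forall>a\<in>carrier R. \<forall>x\<in>carrier M. \<forall>y\<in>carrier M.
        a \<odot>\<^bsub>M\<^esub> (x \<oplus>\<^bsub>M\<^esub> y) = a \<odot>\<^bsub>M\<^esub> x \<oplus>\<^bsub>M\<^esub> a \<odot>\<^bsub>M\<^esub> y) \<and>
    (\<forall>a\<in>carrier R. \<forall>b\<in>carrier R. \<forall>x\<in>carrier M.
        (a \<otimes>\<^bsub>R\<^esub> b) \<odot>\<^bsub>M\<^esub> x = a \<odot>\<^bsub>M\<^esub> (b \<odot>\<^bsub>M\<^esub> x)) \<and>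
    (\<forall>x\<in>carrier M. \<one>\<^bsub>R\<^esub> \<odot>\<^bsub>M\<^esub> x = x)"

definition left_module_hom ::
    "('r, 'x) ring_scheme \<Rightarrow> ('r, 'm) module \<Rightarrow> ('r, 'n) module \<Rightarrow> ('m \<Rightarrow> 'n) set" where
  "left_module_hom R M N = {f. f \<in> carrier M \<rightarrow> carrier N \<and>
     (\<forall>x\<in>carrier M. \<forall>y\<in>carrier M. f (x \<oplus>\<^bsub>M\<^esub> y) = f x \<oplus>\<^bsub>N\<^esub> f y) \<and>
     (\<forall>a\<in>carrier R. \<forall>x\<in>carrier M. f (a \<odot>\<^bsub>M\<^esub> x) = a \<odot>\<^bsub>N\<^esub> f x)}"

definition free_finite_rank :: "('r, 'x) ring_scheme \<Rightarrow> ('r, 'm) module \<Rightarrow> bool" where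
  "free_finite_rank R M \<longleftrightarrow> (\<exists>B. finite B \<and> B \<subseteq> carrier M \<and>
     (\<forall>m\<in>carrier M. \<exists>!c. c \<in> B \<rightarrow>\<^sub>E carrier R \<and>
        m = finsum M (\<lambda>b. c b \<odot>\<^bsub>M\<^esub> b) B))"

text \<open>dim over kbar of coker f = N / f(M) equals n: there are v_0..v_(n-1) in N whose
 classes form a kbar-basis of the quotient (kbar acting through the constants).\<close>
definition coker_dim_eq ::
    "nat \<Rightarrow> (nat \<Rightarrow> 'a::field, 'm) module \<Rightarrow> (nat \<Rightarrow> 'a, 'n) module \<Rightarrow> ('m \<Rightarrow> 'n) \<Rightarrow> nat \<Rightarrow> bool" where
  "coker_dim_eq q M N f n \<longleftrightarrow> (\<exists>v. (\<forall>i<n. v i \<in> carrier N) \<and>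
     (\<forall>h\<in>carrier N. \<exists>a. \<exists>x\<in>carrier M.
        h = f x \<oplus>\<^bsub>N\<^esub> finsum N (\<lambda>i. skew_const (a i) \<odot>\<^bsub>N\<^esub> v i) {..<n}) \<and>
     (\<forall>a. finsum N (\<lambda>i. skew_const (a i) \<odot>\<^bsub>N\<^esub> v i) {..<n} \<in> f ` carrier M
          \<longrightarrow> (\<forall>i<n. a i = 0)))"

definition mult_image :: "('r, 'm) module \<Rightarrow> 'r \<Rightarrow> 'm set" where
  "mult_image M r = (\<lambda>h. r \<odot>\<^bsub>M\<^esub> h) ` carrier M"

definition quot_mod :: "('r, 'm) module \<Rightarrow> 'r \<Rightarrow> 'm set set" where
  "quot_mod M r = a_rcosets\<^bsub>M\<^esub> (mult_image M r)"

definition map_mod ::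
    "('r, 'm) module \<Rightarrow> ('r, 'n) module \<Rightarrow> ('m \<Rightarrow> 'n) \<Rightarrow> 'r \<Rightarrow> 'm set \<Rightarrow> 'n set" where
  "map_mod M N f r C = (mult_image N r) +>\<^bsub>N\<^esub> f (SOME h. h \<in> C)"

definition ker_map_mod ::
    "('r, 'm) module \<Rightarrow> ('r, 'n) module \<Rightarrow> ('m \<Rightarrow> 'n) \<Rightarrow> 'r \<Rightarrow> 'm set set" where
  "ker_map_mod M N f r = {C \<in> quot_mod M r. map_mod M N f r C = mult_image N r}"

end

theory Submission
  imports Defs "HOL-Library.Function_Algebras"
begin

(* Choose v_0, ..., v_(n-1) in H1 whose classes form a kbar-basis of coker f.  In these
   coordinates multiplication by sigma on coker f becomes an additive map S on kbar^n with
   S (c a) = c^(1/q) S a.  Since f is injective and sigma, sigma - 1 act injectively on the free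
   module H1, the kernel of f mod (sigma - 1) is in bijection with the fixed points of S, and
   f mod sigma is bijective iff S is.

   Lang's theorem for such semilinear maps finishes the proof.  A maximal kbar-independent set B
   of fixed points spans all fixed points over F_q, so S has q^|B| <= q^n fixed points, and
   |B| = n iff B spans kbar^n, which forces S to be bijective.  Conversely, for bijective S follow
   the orbit of any vector under S^-1: its first linear relation modulo span B gives polynomial
   equations, solvable in the algebraically closed kbar, for a vector fixed modulo span B; the
   Artin-Schreier equation t - t^q = b then corrects it to a fixed vector, and descending along
   the orbit puts the starting vector into span B. *)

section \<open>Frobenius on an algebraically closed field\<close>

lemma card_roots_separable:
  fixes P :: "'a::field poly"
  assumes alg_closed: "\<And>Q::'a poly. degree Q > 0 \<Longrightarrow> \<exists>x. poly Q x = 0"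
    and "P \<noteq> 0" and "\<And>x. poly P x = 0 \<Longrightarrow> poly (pderiv P) x \<noteq> 0"
  shows "card {x. poly P x = 0} = degree P"
  using assms(2,3)
proof (induction "degree P" arbitrary: P rule: less_induct)
  case less
  show ?case
  proof (cases "degree P = 0")
    case True
    then obtain c where "P = [:c:]" by (metis degree_eq_zeroE)
    with less.prems show ?thesis by simp
  next
    case False
    then obtain r where r: "poly P r = 0" using alg_closed by blast
    define Q where "Q = synthetic_div P r"
    have PQ: "P = [:-r, 1:] * Q" using synthetic_div_correct'[of r P] r by (simp add: Q_def)
    have "Q \<noteq> 0" using less.prems(1) PQ by auto
    have deg: "degree P = Suc (degree Q)"
      using \<open>Q \<noteq> 0\<close> by (subst PQ, subst degree_mult_eq) auto
    have "pderiv [:-r, 1:] = 1" by (simp add: pderiv_pCons)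
    then have dP: "pderiv P = Q + [:-r, 1:] * pderiv Q"
      by (subst PQ) (simp only: pderiv_mult mult_1_right add.commute)
    have Qr: "poly Q r \<noteq> 0" using less.prems(2)[OF r] dP by simp
    have "card {x. poly Q x = 0} = degree Q"
    proof (rule less.hyps)
      fix x assume "poly Q x = 0"
      then show "poly (pderiv Q) x \<noteq> 0" using less.prems(2)[of x] PQ dP by auto
    qed (use deg \<open>Q \<noteq> 0\<close> in auto)
    moreover have "{x. poly P x = 0} = insert r {x. poly Q x = 0}" using PQ by auto
    ultimately show ?thesis using Qr poly_roots_finite[OF \<open>Q \<noteq> 0\<close>] deg by simp
  qed
qed

lemma degree_monom_diff:
  assumes "degree p < n"
  shows "degree (monom (1::'a::field) n - p) = n"
proof -
  have "degree (monom (1::'a) n + - p) = n"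
    using assms by (subst degree_add_eq_left) (auto simp: degree_monom_eq)
  then show ?thesis by simp
qed

text \<open>The parameter \<open>phi\<close> only serves to fix the field type of the locale.\<close>

locale alg_closed_frobenius =
  fixes q :: nat and phi :: "'a::field \<Rightarrow> 'a"
  assumes phi_eq: "phi = frob_inv q"
    and q_CHAR_power: "\<exists>e>0. q = CHAR('a) ^ e"
    and prime_CHAR: "prime CHAR('a)"
    and alg_closed: "\<And>P::'a poly. degree P > 0 \<Longrightarrow> \<exists>x. poly P x = 0"
begin

lemma q_ge_2: "q \<ge> 2"
proof -
  obtain e where e: "e > 0" "q = CHAR('a) ^ e" using q_CHAR_power by blast
  have "CHAR('a) \<ge> 2" using prime_CHAR prime_ge_2_nat by blast
  then have "CHAR('a) ^ 1 \<le> CHAR('a) ^ e" using e(1) by (intro power_increasing) auto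
  with \<open>CHAR('a) \<ge> 2\<close> e(2) show ?thesis by simp
qed

lemma of_nat_q [simp]: "(of_nat q :: 'a) = 0"
proof -
  obtain e where "e > 0" "q = CHAR('a) ^ e" using q_CHAR_power by blast
  then show ?thesis by (simp add: of_nat_power)
qed

lemma power_q_add: "((x::'a) + y) ^ q = x ^ q + y ^ q"
proof -
  obtain e where "q = CHAR('a) ^ e" using q_CHAR_power by blast
  then show ?thesis by (rule freshmans_dream'[OF prime_CHAR])
qed

lemma power_q_minus: "(- (x::'a)) ^ q = - (x ^ q)"
proof -
  have "x ^ q + (- x) ^ q = 0"
    using power_q_add[of x "- x"] q_ge_2 by (simp add: power_0_left)
  then show ?thesis by (simp add: eq_neg_iff_add_eq_0 add.commute)
qed

lemma power_q_diff: "((x::'a) - y) ^ q = x ^ q - y ^ q"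
  using power_q_add[of x "- y"] power_q_minus[of y] by simp

lemma power_q_inj: "(x::'a) ^ q = y ^ q \<Longrightarrow> x = y"
  using power_q_diff[of x y] by simp

lemma power_q_root_exists: "\<exists>y::'a. y ^ q = x"
proof -
  have "degree (monom (1::'a) q - [:x:]) = q"
    using q_ge_2 by (intro degree_monom_diff) simp
  then obtain y where "poly (monom (1::'a) q - [:x:]) y = 0"
    using alg_closed q_ge_2 by (metis not_numeral_le_zero zero_less_iff_neq_zero)
  then show ?thesis by (auto simp: poly_monom)
qed

lemma phi_power [simp]: "phi x ^ q = x"
proof -
  obtain y where y: "y ^ q = x" using power_q_root_exists by blast
  have "(THE y. y ^ q = x) = y" using y power_q_inj by (intro the_equality) auto
  then show ?thesis unfolding phi_eq frob_inv_def using y by simp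
qed

lemma phi_of_power [simp]: "phi (x ^ q) = x"
  using phi_power power_q_inj by blast

lemma phi_0 [simp]: "phi 0 = 0"
  using phi_of_power[of 0] q_ge_2 by (simp add: power_0_left)

lemma phi_eq_0_iff [simp]: "phi x = 0 \<longleftrightarrow> x = 0"
  by (metis phi_0 phi_power)

lemma phi_eq_self_iff: "phi c = c \<longleftrightarrow> c \<in> Fq q"
  unfolding Fq_def mem_Collect_eq by (metis phi_of_power phi_power)

lemma card_Fq: "finite (Fq q :: 'a set)" "card (Fq q :: 'a set) = q"
proof -
  let ?P = "monom (1::'a) q - [:0, 1:]"
  have deg: "degree ?P = q" using q_ge_2 by (intro degree_monom_diff) simp
  then have "?P \<noteq> 0" using q_ge_2 by auto
  have "pderiv ?P = [:- 1:]" by (simp add: pderiv_monom pderiv_diff pderiv_pCons)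
  then have "card {x. poly ?P x = 0} = q"
    using card_roots_separable[OF alg_closed \<open>?P \<noteq> 0\<close>] deg by force
  moreover have "{x. poly ?P x = 0} = Fq q" by (auto simp: Fq_def poly_monom)
  ultimately show "finite (Fq q :: 'a set)" "card (Fq q :: 'a set) = q"
    using poly_roots_finite[OF \<open>?P \<noteq> 0\<close>] by simp_all
qed

lemma artin_schreier_solvable: "\<exists>t::'a. t - t ^ q = b"
proof -
  have "degree (monom (1::'a) q - [:b, 1:]) = q" using q_ge_2 by (intro degree_monom_diff) simp
  then obtain y where "poly (monom (1::'a) q - [:b, 1:]) y = 0"
    using alg_closed q_ge_2 by (metis not_numeral_le_zero zero_less_iff_neq_zero)
  then have "(- y) - (- y) ^ q = b" by (simp add: poly_monom power_q_minus algebra_simps)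
  then show ?thesis by blast
qed

end

lemma alg_closed_frobeniusI:
  assumes "is_alg_closure_of_FqT q (T::'a::field)"
  shows "alg_closed_frobenius q (frob_inv q :: 'a \<Rightarrow> 'a)"
proof -
  from assms obtain p e where "prime p" "e > 0" "q = p ^ e" "CHAR('a) = p"
    unfolding is_alg_closure_of_FqT_def by blast
  with assms show ?thesis
    unfolding is_alg_closure_of_FqT_def alg_closed_frobenius_def by auto
qed

section \<open>The skew polynomial ring\<close>

lemma skew_poly_ring_simps:
  "carrier (skew_poly_ring q) = {f. finite {i. f i \<noteq> 0}}"
  "f \<otimes>\<^bsub>skew_poly_ring q\<^esub> g = (\<lambda>n. \<Sum>i\<le>n. f i * (frob_inv q ^^ i) (g (n - i)))"
  "\<one>\<^bsub>skew_poly_ring q\<^esub> = (\<lambda>n. if n = 0 then 1 else 0)"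
  "\<zero>\<^bsub>skew_poly_ring q\<^esub> = (\<lambda>n. 0)"
  "f \<oplus>\<^bsub>skew_poly_ring q\<^esub> g = (\<lambda>n. f n + g n)"
  by (simp_all add: skew_poly_ring_def)

lemma skew_const_carrier [simp]: "skew_const c \<in> carrier (skew_poly_ring q)"
proof -
  have "{i. skew_const c i \<noteq> 0} \<subseteq> {0}" by (auto simp: skew_const_def)
  then show ?thesis by (auto simp: skew_poly_ring_simps intro: finite_subset)
qed

lemma skew_sigma_carrier [simp]: "skew_sigma \<in> carrier (skew_poly_ring q)"
proof -
  have "{i. (skew_sigma :: nat \<Rightarrow> 'a::field) i \<noteq> 0} \<subseteq> {1}" by (auto simp: skew_sigma_def)
  then show ?thesis by (auto simp: skew_poly_ring_simps intro: finite_subset)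
qed

lemma skew_const_add: "skew_const c \<oplus>\<^bsub>skew_poly_ring q\<^esub> skew_const d = skew_const (c + d)"
  by (auto simp: skew_poly_ring_simps skew_const_def)

lemma skew_const_0: "skew_const 0 = \<zero>\<^bsub>skew_poly_ring q\<^esub>"
  by (auto simp: skew_poly_ring_simps skew_const_def)

lemma skew_const_mult: "skew_const c \<otimes>\<^bsub>skew_poly_ring q\<^esub> g = (\<lambda>n. c * g n)"
proof
  fix n
  have "(\<Sum>i\<le>n. skew_const c i * (frob_inv q ^^ i) (g (n - i)))
      = (\<Sum>i\<in>{0}. skew_const c i * (frob_inv q ^^ i) (g (n - i)))"
    by (intro sum.mono_neutral_right) (auto simp: skew_const_def)
  then show "(skew_const c \<otimes>\<^bsub>skew_poly_ring q\<^esub> g) n = c * g n"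
    by (simp add: skew_poly_ring_simps skew_const_def)
qed

lemma skew_const_mult_const:
  "skew_const c \<otimes>\<^bsub>skew_poly_ring q\<^esub> skew_const d = skew_const (c * d)"
  unfolding skew_const_mult by (auto simp: skew_const_def)

context alg_closed_frobenius
begin

lemma skew_sigma_mult:
  "skew_sigma \<otimes>\<^bsub>skew_poly_ring q\<^esub> g = (\<lambda>n. if n = 0 then 0 else phi (g (n - 1)))"
proof
  fix n
  show "(skew_sigma \<otimes>\<^bsub>skew_poly_ring q\<^esub> g) n = (if n = 0 then 0 else phi (g (n - 1)))"
  proof (cases "n = 0")
    case False
    have "(\<Sum>i\<le>n. skew_sigma i * (frob_inv q ^^ i) (g (n - i)))
        = (\<Sum>i\<in>{1}. skew_sigma i * (frob_inv q ^^ i) (g (n - i)))"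
      using False by (intro sum.mono_neutral_right) (auto simp: skew_sigma_def)
    then show ?thesis using False by (simp add: skew_poly_ring_simps skew_sigma_def phi_eq)
  qed (simp add: skew_poly_ring_simps skew_sigma_def)
qed

lemma skew_sigma_const:
  "skew_sigma \<otimes>\<^bsub>skew_poly_ring q\<^esub> skew_const c
    = skew_const (phi c) \<otimes>\<^bsub>skew_poly_ring q\<^esub> skew_sigma"
  unfolding skew_sigma_mult skew_const_mult by (auto simp: skew_const_def skew_sigma_def)

lemma skew_sigma_mult_eq_zero:
  fixes g :: "nat \<Rightarrow> 'a"
  assumes "skew_sigma \<otimes>\<^bsub>skew_poly_ring q\<^esub> g = \<zero>\<^bsub>skew_poly_ring q\<^esub>"
  shows "g = \<zero>\<^bsub>skew_poly_ring q\<^esub>"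
proof -
  have "phi (g n) = 0" for n
    using fun_cong[OF assms[unfolded skew_sigma_mult], of "Suc n"]
    by (simp add: skew_poly_ring_simps(4))
  then show ?thesis by (auto simp: skew_poly_ring_simps(4))
qed

lemma skew_sigma_mult_eq_self:
  fixes g :: "nat \<Rightarrow> 'a"
  assumes fixed: "skew_sigma \<otimes>\<^bsub>skew_poly_ring q\<^esub> g = g"
  shows "g = \<zero>\<^bsub>skew_poly_ring q\<^esub>"
proof -
  have "g n = 0" for n
  proof (induction n)
    case 0 then show ?case using fun_cong[OF fixed, of 0] by (simp add: skew_sigma_mult)
  next
    case (Suc n) then show ?case using fun_cong[OF fixed, of "Suc n"] by (simp add: skew_sigma_mult)
  qed
  then show ?thesis by (auto simp: skew_poly_ring_simps(4))
qed

end

section \<open>Lang's theorem for semilinear maps\<close>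

lemma (in vector_space) span_image_subset_sums:
  assumes "finite A"
  shows "span (v ` A) \<subseteq> range (\<lambda>c. \<Sum>i\<in>A. scale (c i) (v i))"
  using assms
proof (induction A rule: finite_induct)
  case empty
  show ?case by (auto intro: range_eqI[where x = "\<lambda>_. 0"])
next
  case (insert a A)
  show ?case
  proof
    fix x assume "x \<in> span (v ` insert a A)"
    then obtain k where "x - scale k (v a) \<in> span (v ` A)" by (auto simp: span_breakdown_eq)
    then obtain c where c: "x - scale k (v a) = (\<Sum>i\<in>A. scale (c i) (v i))"
      using insert.IH by blast
    have "(\<Sum>i\<in>A. scale ((c(a := k)) i) (v i)) = (\<Sum>i\<in>A. scale (c i) (v i))"
      using insert.hyps(2) by (intro sum.cong) auto
    then have "(\<Sum>i\<in>insert a A. scale ((c(a := k)) i) (v i)) = x"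
      using insert.hyps by (simp flip: c)
    then show "x \<in> range (\<lambda>c. \<Sum>i\<in>insert a A. scale (c i) (v i))"
      by (intro range_eqI[where x = "c(a := k)"]) simp
  qed
qed

lemma (in vector_space) independent_Un_image_lessThan:
  assumes "independent B" "finite B"
    and "\<And>j. j < k \<Longrightarrow> v j \<notin> span (B \<union> v ` {..<j})"
  shows "independent (B \<union> v ` {..<k}) \<and> card (B \<union> v ` {..<k}) = card B + k"
  using assms(3)
proof (induction k)
  case 0
  show ?case using assms(1) by simp
next
  case (Suc k)
  have IH: "independent (B \<union> v ` {..<k})" "card (B \<union> v ` {..<k}) = card B + k"
    using Suc by auto
  have notin: "v k \<notin> span (B \<union> v ` {..<k})" using Suc.prems[of k] by blast
  then have "v k \<notin> B \<union> v ` {..<k}" by (meson span_base)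
  moreover have "B \<union> v ` {..<Suc k} = insert (v k) (B \<union> v ` {..<k})"
    by (auto simp: lessThan_Suc)
  ultimately show ?case
    using IH notin assms(2) by (simp add: independent_insert)
qed

lemma sum_fun_apply: "(sum F A) i = (\<Sum>x\<in>A. F x i)"
  for F :: "'b \<Rightarrow> nat \<Rightarrow> 'a::comm_monoid_add"
  by (induction A rule: infinite_finite_induct) auto

text \<open>\<open>kbar\<^sup>n\<close> is modelled as \<open>coord_space n\<close>, the sequences vanishing from index \<open>n\<close> on, inside
  the \<open>kbar\<close>-vector space of all sequences with scalar multiplication \<open>vscale\<close>.\<close>

definition vscale :: "'a::field \<Rightarrow> (nat \<Rightarrow> 'a) \<Rightarrow> nat \<Rightarrow> 'a" where
  "vscale c a = (\<lambda>i. c * a i)"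

lemma vscale_apply: "vscale c a i = c * a i"
  by (simp add: vscale_def)

interpretation vec: vector_space "vscale :: 'a::field \<Rightarrow> (nat \<Rightarrow> 'a) \<Rightarrow> nat \<Rightarrow> 'a"
  by unfold_locales (auto simp: vscale_def fun_eq_iff algebra_simps)

definition coord_space :: "nat \<Rightarrow> (nat \<Rightarrow> 'a::field) set" where
  "coord_space n = {a. \<forall>i\<ge>n. a i = 0}"

definition unit_coord :: "nat \<Rightarrow> nat \<Rightarrow> 'a::field" where
  "unit_coord i = (\<lambda>j. if j = i then 1 else 0)"

lemma subspace_coord_space: "vec.subspace (coord_space n)"
  unfolding vec.subspace_def coord_space_def by (auto simp: vscale_apply)

lemma coord_space_zero [simp]: "0 \<in> coord_space n"
  and coord_space_add [simp]: "a \<in> coord_space n \<Longrightarrow> b \<in> coord_space n \<Longrightarrow> a + b \<in> coord_space n"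
  and coord_space_diff [simp]: "a \<in> coord_space n \<Longrightarrow> b \<in> coord_space n \<Longrightarrow> a - b \<in> coord_space n"
  and coord_space_vscale [simp]: "a \<in> coord_space n \<Longrightarrow> vscale c a \<in> coord_space n"
  by (simp_all add: coord_space_def vscale_apply)

lemma coord_space_sum:
  "(\<And>i. i \<in> A \<Longrightarrow> v i \<in> coord_space n) \<Longrightarrow> (\<Sum>i\<in>A. vscale (c i) (v i)) \<in> coord_space n"
  by (intro vec.subspace_sum[OF subspace_coord_space]) simp

lemma unit_coord_inj: "inj unit_coord"
  by (rule injI) (metis unit_coord_def zero_neq_one)

lemma coord_space_subset_span_unit_coords:
  "coord_space n \<subseteq> vec.span (unit_coord ` {..<n} :: (nat \<Rightarrow> 'a::field) set)"
proof
  fix a :: "nat \<Rightarrow> 'a" assume a: "a \<in> coord_space n"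
  have "a = (\<Sum>i<n. vscale (a i) (unit_coord i))"
    using a by (auto simp: sum_fun_apply vscale_apply unit_coord_def coord_space_def if_distrib cong: if_cong)
  also have "\<dots> \<in> vec.span (unit_coord ` {..<n})"
    by (intro vec.span_sum vec.span_scale vec.span_base) auto
  finally show "a \<in> vec.span (unit_coord ` {..<n})" .
qed

lemma independent_unit_coords: "vec.independent (unit_coord ` {..<n} :: (nat \<Rightarrow> 'a::field) set)"
proof (rule vec.independent_if_scalars_zero)
  fix g :: "(nat \<Rightarrow> 'a) \<Rightarrow> 'a" and x :: "nat \<Rightarrow> 'a"
  assume sum0: "(\<Sum>x\<in>unit_coord ` {..<n}. vscale (g x) x) = 0" and "x \<in> unit_coord ` {..<n}"
  then obtain i where i: "i < n" "x = unit_coord i" by auto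
  have "0 = (\<Sum>x\<in>unit_coord ` {..<n}. vscale (g x) x) i" using sum0 by simp
  also have "\<dots> = (\<Sum>j<n. g (unit_coord j) * unit_coord j i)"
    by (simp add: sum_fun_apply vscale_apply sum.reindex[OF inj_on_subset[OF unit_coord_inj]])
  also have "\<dots> = g x" using i by (auto simp: unit_coord_def if_distrib cong: if_cong)
  finally show "g x = 0" by simp
qed simp

lemma card_unit_coords: "card (unit_coord ` {..<n} :: (nat \<Rightarrow> 'a::field) set) = n"
  by (simp add: card_image[OF inj_on_subset[OF unit_coord_inj]])

lemma independent_coord_space_card_le:
  fixes B :: "(nat \<Rightarrow> 'a::field) set"
  assumes "B \<subseteq> coord_space n" "vec.independent B"
  shows "finite B \<and> card B \<le> n"
  using vec.independent_span_bound[OF _ assms(2)] assms(1) coord_space_subset_span_unit_coords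
    card_unit_coords[of n, where 'a = 'a] by (metis finite_imageI finite_lessThan subset_trans)

lemma span_subset_coord_space: "B \<subseteq> coord_space n \<Longrightarrow> vec.span B \<subseteq> coord_space n"
  by (rule vec.span_minimal[OF _ subspace_coord_space])

locale frob_semilinear = alg_closed_frobenius q phi for q :: nat and phi :: "'a::field \<Rightarrow> 'a" +
  fixes n :: nat and S :: "(nat \<Rightarrow> 'a) \<Rightarrow> nat \<Rightarrow> 'a"
  assumes S_closed: "a \<in> coord_space n \<Longrightarrow> S a \<in> coord_space n"
    and S_add: "a \<in> coord_space n \<Longrightarrow> b \<in> coord_space n \<Longrightarrow> S (a + b) = S a + S b"
    and S_scale: "a \<in> coord_space n \<Longrightarrow> S (vscale c a) = vscale (phi c) (S a)"
begin

abbreviation V :: "(nat \<Rightarrow> 'a) set" where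
  "V \<equiv> coord_space n"

lemma S_zero: "S 0 = 0"
  using S_scale[of 0 0] by simp

lemma S_diff: "a \<in> V \<Longrightarrow> b \<in> V \<Longrightarrow> S (a - b) = S a - S b"
  using S_add[of "a - b" b] by (simp add: algebra_simps)

lemma S_sum:
  assumes "\<And>i. i \<in> A \<Longrightarrow> v i \<in> V"
  shows "S (\<Sum>i\<in>A. vscale (c i) (v i)) = (\<Sum>i\<in>A. vscale (phi (c i)) (S (v i)))"
  using assms
proof (induction A rule: infinite_finite_induct)
  case (insert x F)
  have "(\<Sum>i\<in>F. vscale (c i) (v i)) \<in> V" "v x \<in> V"
    using insert by (auto intro: coord_space_sum)
  then have "S (\<Sum>i\<in>insert x F. vscale (c i) (v i))
      = vscale (phi (c x)) (S (v x)) + S (\<Sum>i\<in>F. vscale (c i) (v i))"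
    using insert.hyps by (simp add: S_add S_scale)
  then show ?case using insert by (simp del: plus_fun_apply)
qed (simp_all add: S_zero)

definition fixed_points :: "(nat \<Rightarrow> 'a) set" where
  "fixed_points = {a \<in> V. S a = a}"

definition fixed_basis :: "(nat \<Rightarrow> 'a) set" where
  "fixed_basis = (SOME B. B \<subseteq> fixed_points \<and> vec.independent B \<and> fixed_points \<subseteq> vec.span B)"

lemma fixed_basis:
  "fixed_basis \<subseteq> fixed_points" "vec.independent fixed_basis" "fixed_points \<subseteq> vec.span fixed_basis"
proof -
  have "\<exists>B. B \<subseteq> fixed_points \<and> vec.independent B \<and> fixed_points \<subseteq> vec.span B"
    by (metis vec.maximal_independent_subset[of fixed_points])
  then have "fixed_basis \<subseteq> fixed_points \<and> vec.independent fixed_basis \<and> fixed_points \<subseteq> vec.span fixed_basis"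
    unfolding fixed_basis_def by (rule someI_ex)
  then show "fixed_basis \<subseteq> fixed_points" "vec.independent fixed_basis"
    "fixed_points \<subseteq> vec.span fixed_basis" by auto
qed

lemma fixed_basis_subset: "fixed_basis \<subseteq> V"
  using fixed_basis(1) by (auto simp: fixed_points_def)

lemma S_fixed_basis: "u \<in> fixed_basis \<Longrightarrow> S u = u"
  using fixed_basis(1) by (auto simp: fixed_points_def)

lemma finite_fixed_basis: "finite fixed_basis" and card_fixed_basis_le: "card fixed_basis \<le> n"
  using independent_coord_space_card_le[OF fixed_basis_subset fixed_basis(2)] by auto

lemma span_fixed_basis_subset: "vec.span fixed_basis \<subseteq> V"
  by (rule span_subset_coord_space[OF fixed_basis_subset])

lemma span_fixed_basis_iff:
  "x \<in> vec.span fixed_basis \<longleftrightarrow> (\<exists>c. x = (\<Sum>u\<in>fixed_basis. vscale (c u) u))"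
  using vec.span_finite[OF finite_fixed_basis] by auto

lemma fixed_basis_coeffs_unique:
  assumes "(\<Sum>u\<in>fixed_basis. vscale (c u) u) = (\<Sum>u\<in>fixed_basis. vscale (d u) u)"
    and "u \<in> fixed_basis"
  shows "c u = d u"
proof -
  have "(\<Sum>u\<in>fixed_basis. vscale (c u - d u) u) = 0"
    using assms(1) by (simp add: vec.scale_left_diff_distrib sum_subtractf)
  then show ?thesis
    using vec.independentD[OF fixed_basis(2) finite_fixed_basis subset_refl] assms(2) by force
qed

lemma S_sum_fixed_basis:
  "S (\<Sum>u\<in>fixed_basis. vscale (c u) u) = (\<Sum>u\<in>fixed_basis. vscale (phi (c u)) u)"
  using S_sum[of fixed_basis "\<lambda>u. u" c] fixed_basis_subset S_fixed_basis by auto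

lemma S_span_fixed_basis: "w \<in> vec.span fixed_basis \<Longrightarrow> S w \<in> vec.span fixed_basis"
  by (auto simp: span_fixed_basis_iff S_sum_fixed_basis)

lemma fixed_points_eq_image:
  "fixed_points = (\<lambda>c. \<Sum>u\<in>fixed_basis. vscale (c u) u) ` (fixed_basis \<rightarrow>\<^sub>E Fq q)"
proof (intro equalityI subsetI)
  fix x assume x: "x \<in> fixed_points"
  then obtain c where c: "x = (\<Sum>u\<in>fixed_basis. vscale (c u) u)"
    using fixed_basis(3) span_fixed_basis_iff by blast
  have "(\<Sum>u\<in>fixed_basis. vscale (phi (c u)) u) = (\<Sum>u\<in>fixed_basis. vscale (c u) u)"
    using x c S_sum_fixed_basis by (simp add: fixed_points_def)
  then have "phi (c u) = c u" if "u \<in> fixed_basis" for u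
    using fixed_basis_coeffs_unique[of "\<lambda>u. phi (c u)" c] that by blast
  then have "restrict c fixed_basis \<in> fixed_basis \<rightarrow>\<^sub>E Fq q"
    by (auto simp: phi_eq_self_iff)
  moreover have "x = (\<Sum>u\<in>fixed_basis. vscale (restrict c fixed_basis u) u)"
    using c by simp
  ultimately show "x \<in> (\<lambda>c. \<Sum>u\<in>fixed_basis. vscale (c u) u) ` (fixed_basis \<rightarrow>\<^sub>E Fq q)"
    by blast
next
  fix x assume "x \<in> (\<lambda>c. \<Sum>u\<in>fixed_basis. vscale (c u) u) ` (fixed_basis \<rightarrow>\<^sub>E Fq q)"
  then obtain c where c: "c \<in> fixed_basis \<rightarrow>\<^sub>E Fq q" "x = (\<Sum>u\<in>fixed_basis. vscale (c u) u)"
    by blast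
  have "x \<in> V"
    using c(2) fixed_basis_subset by (auto intro: coord_space_sum)
  moreover have "S x = x"
    using c S_sum_fixed_basis[of c] by (auto simp: phi_eq_self_iff PiE_iff intro!: sum.cong)
  ultimately show "x \<in> fixed_points" by (simp add: fixed_points_def)
qed

lemma card_fixed_points: "finite fixed_points" "card fixed_points = q ^ card fixed_basis"
proof -
  have "inj_on (\<lambda>c. \<Sum>u\<in>fixed_basis. vscale (c u) u) (fixed_basis \<rightarrow>\<^sub>E Fq q)"
  proof (rule inj_onI)
    fix c d assume "c \<in> fixed_basis \<rightarrow>\<^sub>E Fq q" "d \<in> fixed_basis \<rightarrow>\<^sub>E Fq q"
      and "(\<Sum>u\<in>fixed_basis. vscale (c u) u) = (\<Sum>u\<in>fixed_basis. vscale (d u) u)"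
    then show "c = d" using fixed_basis_coeffs_unique[of c d] by (intro PiE_ext) auto
  qed
  then show "finite fixed_points" "card fixed_points = q ^ card fixed_basis"
    unfolding fixed_points_eq_image
    by (simp_all add: card_image card_PiE finite_PiE finite_fixed_basis card_Fq)
qed

lemma card_fixed_basis_eq_iff: "card fixed_basis = n \<longleftrightarrow> V \<subseteq> vec.span fixed_basis"
proof
  assume card: "card fixed_basis = n"
  show "V \<subseteq> vec.span fixed_basis"
  proof (rule ccontr)
    assume "\<not> V \<subseteq> vec.span fixed_basis"
    then obtain a where a: "a \<in> V" "a \<notin> vec.span fixed_basis" by blast
    then have "vec.independent (insert a fixed_basis)" "a \<notin> fixed_basis"
      using fixed_basis(2) vec.span_base by (auto simp: vec.independent_insert)
    then have "card (insert a fixed_basis) \<le> n"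
      using independent_coord_space_card_le[of "insert a fixed_basis" n] a fixed_basis_subset by blast
    then show False
      using card finite_fixed_basis \<open>a \<notin> fixed_basis\<close> by simp
  qed
next
  assume "V \<subseteq> vec.span fixed_basis"
  then have "unit_coord ` {..<n} \<subseteq> vec.span fixed_basis"
    by (auto simp: coord_space_def unit_coord_def)
  then have "n \<le> card fixed_basis"
    using vec.independent_span_bound[OF finite_fixed_basis independent_unit_coords[of n]]
      card_unit_coords[of n, where 'a = 'a] by simp
  then show "card fixed_basis = n" using card_fixed_basis_le by simp
qed

lemma bij_if_span_fixed_basis:
  assumes span: "V \<subseteq> vec.span fixed_basis"
  shows "\<forall>a\<in>V. S a = 0 \<longrightarrow> a = 0" "\<forall>b\<in>V. \<exists>a\<in>V. S a = b"
proof safe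
  fix a assume "a \<in> V" "S a = 0"
  then obtain c where c: "a = (\<Sum>u\<in>fixed_basis. vscale (c u) u)"
    using span span_fixed_basis_iff by blast
  have zero: "(\<Sum>u\<in>fixed_basis. vscale (phi (c u)) u) = (\<Sum>u\<in>fixed_basis. vscale 0 u)"
    using \<open>S a = 0\<close> c S_sum_fixed_basis by simp
  have "c u = 0" if "u \<in> fixed_basis" for u
    using fixed_basis_coeffs_unique[OF zero that] by simp
  then show "a = 0" using c by simp
next
  fix b assume "b \<in> V"
  then obtain c where c: "b = (\<Sum>u\<in>fixed_basis. vscale (c u) u)"
    using span span_fixed_basis_iff by blast
  have "S (\<Sum>u\<in>fixed_basis. vscale (c u ^ q) u) = b"
    using c S_sum_fixed_basis by simp
  moreover have "(\<Sum>u\<in>fixed_basis. vscale (c u ^ q) u) \<in> V"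
    using fixed_basis_subset by (intro coord_space_sum) blast
  ultimately show "\<exists>a\<in>V. S a = b" by blast
qed

end

primrec fixed_coeff_poly :: "nat \<Rightarrow> (nat \<Rightarrow> 'a::field) \<Rightarrow> nat \<Rightarrow> 'a poly" where
  "fixed_coeff_poly q c 0 = smult (c 0) (monom 1 q)"
| "fixed_coeff_poly q c (Suc i) = fixed_coeff_poly q c i ^ q + smult (c (Suc i)) (monom 1 q)"

context alg_closed_frobenius
begin

lemma degree_fixed_coeff_poly:
  assumes "c 0 \<noteq> 0"
  shows "degree (fixed_coeff_poly q c i :: 'a poly) = q ^ Suc i"
proof (induction i)
  case 0
  show ?case using assms by (simp add: degree_monom_eq)
next
  case (Suc i)
  then have "fixed_coeff_poly q c i \<noteq> 0" using q_ge_2 by auto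
  then have deg: "degree (fixed_coeff_poly q c i ^ q) = q ^ Suc (Suc i)"
    using Suc by (simp add: degree_power_eq)
  have "degree (smult (c (Suc i)) (monom (1::'a) q)) \<le> q ^ 1"
    by (simp add: degree_monom_le)
  also have "\<dots> < q ^ Suc (Suc i)"
    using q_ge_2 by (intro power_strict_increasing) auto
  finally show ?case using deg by (simp add: degree_add_eq_left)
qed

lemma monom_2_dvd_fixed_coeff_poly: "monom (1::'a) 2 dvd fixed_coeff_poly q c i"
proof -
  have "monom (1::'a) q = monom 1 2 * monom 1 (q - 2)"
    by (simp only: mult_monom mult_1 le_add_diff_inverse[OF q_ge_2])
  then have smult: "monom (1::'a) 2 dvd smult b (monom 1 q)" for b
    by (simp add: dvd_smult)
  show ?thesis
  proof (induction i)
    case (Suc i)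
    have "fixed_coeff_poly q c i dvd fixed_coeff_poly q c i ^ q"
      using q_ge_2 by simp
    then show ?case using Suc smult by (auto intro: dvd_add dvd_trans)
  qed (simp add: smult)
qed

text \<open>If \<open>T\<^sup>m\<^sup>+\<^sup>1 e = w + (\<Sum>i\<le>m. c\<^sub>i T\<^sup>i e)\<close> for a map \<open>T\<close> with \<open>T (c x) = c\<^sup>q T x\<close>, then
  \<open>x = (\<Sum>i\<le>m. y\<^sub>i T\<^sup>i e)\<close> satisfies \<open>T x = x + z\<^sup>q w\<close> as soon as the \<open>y\<^sub>i\<close> satisfy the recursion
  below and \<open>y\<^sub>m = z\<close>.  Its solutions are \<open>y\<^sub>i = poly (fixed_coeff_poly q c i) z\<close>, and \<open>y\<^sub>m = z\<close> has a
  root \<open>z \<noteq> 0\<close> because \<open>X\<^sup>2\<close> divides \<open>fixed_coeff_poly q c m\<close>.\<close>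

lemma fixed_coeff_seq_exists:
  assumes c0: "c 0 \<noteq> 0"
  obtains z y where "z \<noteq> (0::'a)" "y 0 = c 0 * z ^ q"
    "\<And>i. y (Suc i) = y i ^ q + c (Suc i) * z ^ q" "y m = z"
proof -
  obtain G where G: "fixed_coeff_poly q c m = monom 1 2 * G"
    using monom_2_dvd_fixed_coeff_poly by (metis dvdE)
  have "q ^ Suc m \<ge> 2"
    using self_le_power[of q "Suc m"] q_ge_2 by (simp del: power_Suc)
  then have "G \<noteq> 0" using G degree_fixed_coeff_poly[of c m, OF c0] by auto
  then have "degree (monom (1::'a) 1 * G) = Suc (degree G)"
    by (simp add: degree_mult_eq degree_monom_eq)
  then have "degree (monom (1::'a) 1 * G - 1) > 0"
    using degree_add_eq_left[of "- 1" "monom (1::'a) 1 * G"] by simp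
  then obtain z where "poly (monom (1::'a) 1 * G - 1) z = 0" using alg_closed by blast
  then have zG: "z * poly G z = 1" by (simp add: poly_monom)
  show ?thesis
  proof (rule that[of z "\<lambda>i. poly (fixed_coeff_poly q c i) z"])
    show "z \<noteq> 0" using zG by auto
    show "poly (fixed_coeff_poly q c m) z = z"
      using zG by (simp add: G poly_monom power2_eq_square algebra_simps)
  qed (simp_all add: poly_monom)
qed

end

locale bij_frob_semilinear = frob_semilinear +
  assumes S_inj: "a \<in> coord_space n \<Longrightarrow> S a = 0 \<Longrightarrow> a = 0"
    and S_surj: "b \<in> coord_space n \<Longrightarrow> \<exists>a\<in>coord_space n. S a = b"
begin

definition S_inv :: "(nat \<Rightarrow> 'a) \<Rightarrow> nat \<Rightarrow> 'a" where
  "S_inv b = (SOME a. a \<in> V \<and> S a = b)"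

lemma S_inv: "b \<in> V \<Longrightarrow> S_inv b \<in> V \<and> S (S_inv b) = b"
  unfolding S_inv_def using S_surj by (rule someI2_bex) auto

lemma S_inv_eqI:
  assumes "a \<in> V" "S a = b" shows "S_inv b = a"
proof -
  have "S_inv b \<in> V" "S (S_inv b) = S a" using S_inv assms S_closed by auto
  then show ?thesis using S_inj[of "S_inv b - a"] S_diff assms(1) by simp
qed

lemma S_inv_sum:
  assumes "\<And>i. i \<in> A \<Longrightarrow> v i \<in> V"
  shows "S_inv (\<Sum>i\<in>A. vscale (c i) (v i)) = (\<Sum>i\<in>A. vscale (c i ^ q) (S_inv (v i)))"
proof (rule S_inv_eqI)
  show "(\<Sum>i\<in>A. vscale (c i ^ q) (S_inv (v i))) \<in> V"
    using assms S_inv by (intro coord_space_sum) blast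
  show "S (\<Sum>i\<in>A. vscale (c i ^ q) (S_inv (v i))) = (\<Sum>i\<in>A. vscale (c i) (v i))"
    using assms S_inv by (simp add: S_sum)
qed

lemma S_inv_add: "a \<in> V \<Longrightarrow> b \<in> V \<Longrightarrow> S_inv (a + b) = S_inv a + S_inv b"
  using S_inv[of a] S_inv[of b] by (intro S_inv_eqI) (auto simp: S_add)

lemma S_inv_fixed_basis: "u \<in> fixed_basis \<Longrightarrow> S_inv u = u"
  using fixed_basis_subset S_fixed_basis by (intro S_inv_eqI) auto

text \<open>On the span of the fixed basis, \<open>x - S_inv x\<close> acts coordinatewise as the surjective
  Artin--Schreier map \<open>t \<mapsto> t - t\<^sup>q\<close>; this turns a fixed point modulo that span into a fixed
  point.\<close>

lemma in_span_fixed_basis_if_S_inv_shift: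
  assumes x: "x \<in> V" and w: "w \<in> vec.span fixed_basis" and shift: "S_inv x = x + w"
  shows "x \<in> vec.span fixed_basis"
proof -
  obtain b where b: "w = (\<Sum>u\<in>fixed_basis. vscale (b u) u)"
    using w span_fixed_basis_iff by blast
  have "\<forall>u. \<exists>s. s - s ^ q = b u" using artin_schreier_solvable by blast
  then obtain t where t: "\<And>u. t u - t u ^ q = b u" by metis
  define w' where "w' = (\<Sum>u\<in>fixed_basis. vscale (t u) u)"
  have w'_span: "w' \<in> vec.span fixed_basis"
    unfolding w'_def span_fixed_basis_iff by blast
  have w'_V: "w' \<in> V" using w'_span span_fixed_basis_subset by blast
  have "S_inv w' = (\<Sum>u\<in>fixed_basis. vscale (t u ^ q) u)"
    unfolding w'_def using fixed_basis_subset S_inv_sum[of fixed_basis "\<lambda>u. u" t]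
    by (simp add: S_inv_fixed_basis subset_iff)
  then have "w' - S_inv w' = (\<Sum>u\<in>fixed_basis. vscale (t u - t u ^ q) u)"
    by (simp add: w'_def sum_subtractf vec.scale_left_diff_distrib)
  then have "w' - S_inv w' = w" by (simp add: t b)
  then have "S_inv (x + w') = x + w'"
    using shift x w'_V by (simp add: S_inv_add algebra_simps)
  then have "x + w' \<in> fixed_points"
    using S_inv[of "x + w'"] x w'_V by (simp add: fixed_points_def)
  then have "x + w' \<in> vec.span fixed_basis" using fixed_basis(3) by blast
  then show ?thesis using vec.span_diff[OF _ w'_span] by force
qed

definition orbit :: "(nat \<Rightarrow> 'a) \<Rightarrow> nat \<Rightarrow> nat \<Rightarrow> 'a" where
  "orbit e i = (S_inv ^^ i) e"

lemma orbit_0 [simp]: "orbit e 0 = e"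
  and orbit_Suc: "orbit e (Suc i) = S_inv (orbit e i)"
  by (simp_all add: orbit_def)

lemma orbit_closed: "e \<in> V \<Longrightarrow> orbit e i \<in> V"
  by (induction i) (simp_all add: orbit_Suc S_inv)

lemma S_orbit_Suc: "e \<in> V \<Longrightarrow> S (orbit e (Suc i)) = orbit e i"
  by (simp add: orbit_Suc S_inv orbit_closed)

lemma orbit_descent_degenerate:
  assumes e: "e \<in> V" and w: "w \<in> vec.span fixed_basis"
    and rel: "orbit e (Suc m) = w + (\<Sum>i<m. vscale (c i) (orbit e (Suc i)))"
  shows "orbit e m \<in> vec.span (fixed_basis \<union> orbit e ` {..<m})"
proof -
  have wV: "w \<in> V" using w span_fixed_basis_subset by blast
  have sumV: "(\<Sum>i<m. vscale (c i) (orbit e (Suc i))) \<in> V"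
    using orbit_closed[OF e] by (intro coord_space_sum)
  have "orbit e m = S (orbit e (Suc m))" using S_orbit_Suc[OF e] by simp
  also have "\<dots> = S w + (\<Sum>i<m. vscale (phi (c i)) (orbit e i))"
    by (simp add: rel S_add[OF wV sumV] S_sum orbit_closed[OF e] S_orbit_Suc[OF e])
  also have "\<dots> \<in> vec.span (fixed_basis \<union> orbit e ` {..<m})"
  proof (rule vec.span_add)
    show "S w \<in> vec.span (fixed_basis \<union> orbit e ` {..<m})"
      using vec.span_mono[of fixed_basis] S_span_fixed_basis[OF w] by blast
    show "(\<Sum>i<m. vscale (phi (c i)) (orbit e i)) \<in> vec.span (fixed_basis \<union> orbit e ` {..<m})"
      by (intro vec.span_sum vec.span_scale vec.span_base) auto
  qed
  finally show ?thesis .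
qed

lemma orbit_descent_nondegenerate:
  assumes e: "e \<in> V" and w: "w \<in> vec.span fixed_basis"
    and rel: "orbit e (Suc m) = w + (\<Sum>i<Suc m. vscale (c i) (orbit e i))"
    and c0: "c 0 \<noteq> 0"
  shows "orbit e m \<in> vec.span (fixed_basis \<union> orbit e ` {..<m})"
proof -
  obtain z y where z: "z \<noteq> 0" and y0: "y 0 = c 0 * z ^ q"
    and y_Suc: "\<And>i. y (Suc i) = y i ^ q + c (Suc i) * z ^ q" and ym: "y m = z"
    using fixed_coeff_seq_exists[of c m] c0 by metis
  define x where "x = (\<Sum>i<Suc m. vscale (y i) (orbit e i))"
  define r where "r = (\<Sum>i<m. vscale (c (Suc i) * z ^ q) (orbit e (Suc i)))"
  have x: "x = vscale (c 0 * z ^ q) e + (\<Sum>i<m. vscale (y i ^ q) (orbit e (Suc i))) + r"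
    unfolding x_def r_def sum.lessThan_Suc_shift
    by (simp add: y0 y_Suc vec.scale_left_distrib sum.distrib add.assoc)
  have "S_inv x = (\<Sum>i<Suc m. vscale (y i ^ q) (orbit e (Suc i)))"
    unfolding x_def using S_inv_sum[of "{..<Suc m}" "orbit e" y] orbit_closed[OF e]
    by (simp del: sum.lessThan_Suc add: orbit_Suc)
  also have "\<dots> = (\<Sum>i<m. vscale (y i ^ q) (orbit e (Suc i))) + vscale (z ^ q) (orbit e (Suc m))"
    by (simp add: ym)
  also have "vscale (z ^ q) (orbit e (Suc m)) = vscale (z ^ q) w + vscale (c 0 * z ^ q) e + r"
    unfolding rel r_def sum.lessThan_Suc_shift
    by (simp add: vec.scale_right_distrib vec.scale_sum_right mult.commute add.assoc)
  finally have shift: "S_inv x = x + vscale (z ^ q) w"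
    unfolding x by (simp add: algebra_simps del: plus_fun_apply)
  have "x \<in> V" unfolding x_def using orbit_closed[OF e] by (intro coord_space_sum)
  then have "x \<in> vec.span fixed_basis"
    using in_span_fixed_basis_if_S_inv_shift[OF _ vec.span_scale[OF w] shift] by blast
  then have "x \<in> vec.span (fixed_basis \<union> orbit e ` {..<m})"
    using vec.span_mono[of fixed_basis "fixed_basis \<union> orbit e ` {..<m}"] by blast
  moreover have "(\<Sum>i<m. vscale (y i) (orbit e i)) \<in> vec.span (fixed_basis \<union> orbit e ` {..<m})"
    by (intro vec.span_sum vec.span_scale vec.span_base) auto
  moreover have "vscale z (orbit e m) = x - (\<Sum>i<m. vscale (y i) (orbit e i))"
    unfolding x_def by (simp add: ym)
  ultimately have "vscale z (orbit e m) \<in> vec.span (fixed_basis \<union> orbit e ` {..<m})"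
    using vec.span_diff by metis
  then show ?thesis
    using vec.span_scale[of _ _ "inverse z"] z by fastforce
qed

lemma orbit_descent:
  assumes e: "e \<in> V" and "orbit e (Suc m) \<in> vec.span (fixed_basis \<union> orbit e ` {..<Suc m})"
  shows "orbit e m \<in> vec.span (fixed_basis \<union> orbit e ` {..<m})"
proof -
  obtain w r where w: "w \<in> vec.span fixed_basis" and r: "r \<in> vec.span (orbit e ` {..<Suc m})"
    and rel: "orbit e (Suc m) = w + r"
    using assms(2) by (auto simp: vec.span_Un)
  obtain c where "r = (\<Sum>i<Suc m. vscale (c i) (orbit e i))"
    using vec.span_image_subset_sums[of "{..<Suc m}" "orbit e"] r by blast
  then have rel': "orbit e (Suc m) = w + (\<Sum>i<Suc m. vscale (c i) (orbit e i))"
    using rel by simp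
  show ?thesis
  proof (cases "c 0 = 0")
    case True
    with rel' have "orbit e (Suc m) = w + (\<Sum>i<m. vscale (c (Suc i)) (orbit e (Suc i)))"
      unfolding sum.lessThan_Suc_shift by simp
    then show ?thesis by (rule orbit_descent_degenerate[OF e w])
  next
    case False
    then show ?thesis by (rule orbit_descent_nondegenerate[OF e w rel'])
  qed
qed

text \<open>The \<open>S_inv\<close>-orbit of any \<open>e\<close> becomes dependent modulo the span of the
  fixed basis, and descending along the orbit puts \<open>e\<close> itself into that span.\<close>

theorem coord_space_subset_span_fixed_basis: "V \<subseteq> vec.span fixed_basis"
proof
  fix e assume e: "e \<in> V"
  let ?P = "\<lambda>k. orbit e k \<in> vec.span (fixed_basis \<union> orbit e ` {..<k})"
  have "\<exists>k. ?P k"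
  proof (rule ccontr)
    assume "\<nexists>k. ?P k"
    then have "vec.independent (fixed_basis \<union> orbit e ` {..<Suc n})"
      and card: "card (fixed_basis \<union> orbit e ` {..<Suc n}) = card fixed_basis + Suc n"
      using vec.independent_Un_image_lessThan[OF fixed_basis(2) finite_fixed_basis] by blast+
    moreover have "fixed_basis \<union> orbit e ` {..<Suc n} \<subseteq> V"
      using fixed_basis_subset orbit_closed[OF e] by blast
    ultimately have "card (fixed_basis \<union> orbit e ` {..<Suc n}) \<le> n"
      using independent_coord_space_card_le by blast
    then show False using card by simp
  qed
  then obtain k where "?P k" by blast
  then have "?P 0"
    by (induction k) (auto intro: orbit_descent[OF e])
  then show "e \<in> vec.span fixed_basis" by simp
qed

end

context frob_semilinear
begin

lemma card_fixed_points_le: "card fixed_points \<le> q ^ n"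
  using card_fixed_points card_fixed_basis_le q_ge_2 by (simp add: power_increasing)

lemma card_fixed_points_eq_iff:
  "card fixed_points = q ^ n \<longleftrightarrow> (\<forall>a\<in>V. S a = 0 \<longrightarrow> a = 0) \<and> (\<forall>b\<in>V. \<exists>a\<in>V. S a = b)"
proof -
  have "card fixed_points = q ^ n \<longleftrightarrow> card fixed_basis = n"
    using card_fixed_points(2) q_ge_2 by (simp add: power_inject_exp)
  also have "\<dots> \<longleftrightarrow> V \<subseteq> vec.span fixed_basis"
    by (rule card_fixed_basis_eq_iff)
  also have "\<dots> \<longleftrightarrow> (\<forall>a\<in>V. S a = 0 \<longrightarrow> a = 0) \<and> (\<forall>b\<in>V. \<exists>a\<in>V. S a = b)"
  proof
    assume "(\<forall>a\<in>V. S a = 0 \<longrightarrow> a = 0) \<and> (\<forall>b\<in>V. \<exists>a\<in>V. S a = b)"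
    then interpret bij_frob_semilinear q phi n S
      by unfold_locales auto
    show "V \<subseteq> vec.span fixed_basis"
      by (rule coord_space_subset_span_fixed_basis)
  qed (use bij_if_span_fixed_basis in blast)
  finally show ?thesis .
qed

end

section \<open>Left modules and reduction maps\<close>

lemma (in abelian_group) add_eq_add_imp_diff_eq:
  assumes "a \<in> carrier G" "b \<in> carrier G" "c \<in> carrier G" "d \<in> carrier G"
    and "a \<oplus> b = c \<oplus> d"
  shows "b \<ominus> d = c \<ominus> a"
proof -
  have "b \<ominus> d = \<ominus> a \<oplus> (a \<oplus> b) \<ominus> d"
    using assms(1,2) by (simp add: a_assoc[symmetric] l_neg)
  also have "\<dots> = \<ominus> a \<oplus> (c \<oplus> (d \<ominus> d))"
    using assms by (simp add: minus_eq a_assoc)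
  also have "\<dots> = c \<ominus> a"
    using assms by (simp add: minus_eq r_neg a_comm)
  finally show ?thesis .
qed

lemma (in abelian_subgroup) a_rcos_eq_iff:
  assumes "x \<in> carrier G" "y \<in> carrier G"
  shows "H +> x = H +> y \<longleftrightarrow> x \<ominus> y \<in> H"
proof -
  have "H +> x = H +> y \<longleftrightarrow> x \<in> H +> y"
    using assms a_repr_independence' a_repr_independenceD by metis
  also have "\<dots> \<longleftrightarrow> x \<ominus> y \<in> H"
    using assms by (simp add: a_rcos_module minus_eq)
  finally show ?thesis .
qed

lemma (in abelian_subgroup) a_rcos_eq_self_iff:
  "x \<in> carrier G \<Longrightarrow> H +> x = H \<longleftrightarrow> x \<in> H"
  using a_coset_join1 a_coset_join2 a_subgroup by blast

lemma (in abelian_subgroup) some_in_a_rcos: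
  assumes "x \<in> carrier G"
  shows "(SOME h. h \<in> H +> x) \<in> carrier G" "(SOME h. h \<in> H +> x) \<ominus> x \<in> H"
proof -
  have some: "(SOME h. h \<in> H +> x) \<in> H +> x"
    using a_rcos_self[OF assms] by (rule someI)
  show "(SOME h. h \<in> H +> x) \<in> carrier G"
    by (rule a_elemrcos_carrier[OF assms some])
  then show "(SOME h. h \<in> H +> x) \<ominus> x \<in> H"
    using a_rcos_module[OF assms] some by (simp add: minus_eq)
qed

locale left_mod =
  fixes R :: "('r, 'x) ring_scheme" and M :: "('r, 'm) module"
  assumes left_module: "left_module R M"
begin

sublocale R: ring R using left_module by (simp add: left_module_def)
sublocale M: abelian_group M using left_module by (simp add: left_module_def)

lemma smult_closed [simp, intro]:
  "a \<in> carrier R \<Longrightarrow> x \<in> carrier M \<Longrightarrow> a \<odot>\<^bsub>M\<^esub> x \<in> carrier M"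
  and smult_l_distr:
  "a \<in> carrier R \<Longrightarrow> b \<in> carrier R \<Longrightarrow> x \<in> carrier M \<Longrightarrow>
    (a \<oplus>\<^bsub>R\<^esub> b) \<odot>\<^bsub>M\<^esub> x = a \<odot>\<^bsub>M\<^esub> x \<oplus>\<^bsub>M\<^esub> b \<odot>\<^bsub>M\<^esub> x"
  and smult_r_distr:
  "a \<in> carrier R \<Longrightarrow> x \<in> carrier M \<Longrightarrow> y \<in> carrier M \<Longrightarrow>
    a \<odot>\<^bsub>M\<^esub> (x \<oplus>\<^bsub>M\<^esub> y) = a \<odot>\<^bsub>M\<^esub> x \<oplus>\<^bsub>M\<^esub> a \<odot>\<^bsub>M\<^esub> y"
  and smult_assoc:
  "a \<in> carrier R \<Longrightarrow> b \<in> carrier R \<Longrightarrow> x \<in> carrier M \<Longrightarrow>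
    (a \<otimes>\<^bsub>R\<^esub> b) \<odot>\<^bsub>M\<^esub> x = a \<odot>\<^bsub>M\<^esub> (b \<odot>\<^bsub>M\<^esub> x)"
  and smult_one [simp]: "x \<in> carrier M \<Longrightarrow> \<one>\<^bsub>R\<^esub> \<odot>\<^bsub>M\<^esub> x = x"
  using left_module by (simp_all add: left_module_def)

lemma smult_zero_right [simp]: "a \<in> carrier R \<Longrightarrow> a \<odot>\<^bsub>M\<^esub> \<zero>\<^bsub>M\<^esub> = \<zero>\<^bsub>M\<^esub>"
  using smult_r_distr[of a "\<zero>\<^bsub>M\<^esub>" "\<zero>\<^bsub>M\<^esub>"] by simp

lemma smult_zero_left [simp]: "x \<in> carrier M \<Longrightarrow> \<zero>\<^bsub>R\<^esub> \<odot>\<^bsub>M\<^esub> x = \<zero>\<^bsub>M\<^esub>"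
  using smult_l_distr[of "\<zero>\<^bsub>R\<^esub>" "\<zero>\<^bsub>R\<^esub>" x] by simp

lemma smult_minus_right:
  "a \<in> carrier R \<Longrightarrow> x \<in> carrier M \<Longrightarrow> a \<odot>\<^bsub>M\<^esub> (\<ominus>\<^bsub>M\<^esub> x) = \<ominus>\<^bsub>M\<^esub> (a \<odot>\<^bsub>M\<^esub> x)"
  using smult_r_distr[of a "\<ominus>\<^bsub>M\<^esub> x" x] by (simp add: M.l_neg M.minus_equality)

lemma smult_minus_left:
  "a \<in> carrier R \<Longrightarrow> x \<in> carrier M \<Longrightarrow> (\<ominus>\<^bsub>R\<^esub> a) \<odot>\<^bsub>M\<^esub> x = \<ominus>\<^bsub>M\<^esub> (a \<odot>\<^bsub>M\<^esub> x)"
  using smult_l_distr[of "\<ominus>\<^bsub>R\<^esub> a" a x] by (simp add: R.l_neg M.minus_equality)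

lemma smult_diff_right:
  "a \<in> carrier R \<Longrightarrow> x \<in> carrier M \<Longrightarrow> y \<in> carrier M \<Longrightarrow>
    a \<odot>\<^bsub>M\<^esub> (x \<ominus>\<^bsub>M\<^esub> y) = a \<odot>\<^bsub>M\<^esub> x \<ominus>\<^bsub>M\<^esub> a \<odot>\<^bsub>M\<^esub> y"
  by (simp add: a_minus_def smult_r_distr smult_minus_right)

lemma smult_diff_left:
  "a \<in> carrier R \<Longrightarrow> b \<in> carrier R \<Longrightarrow> x \<in> carrier M \<Longrightarrow>
    (a \<ominus>\<^bsub>R\<^esub> b) \<odot>\<^bsub>M\<^esub> x = a \<odot>\<^bsub>M\<^esub> x \<ominus>\<^bsub>M\<^esub> b \<odot>\<^bsub>M\<^esub> x"
  by (simp add: a_minus_def smult_l_distr smult_minus_left)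

lemma smult_finsum:
  assumes "a \<in> carrier R" "g \<in> A \<rightarrow> carrier M"
  shows "a \<odot>\<^bsub>M\<^esub> finsum M g A = finsum M (\<lambda>i. a \<odot>\<^bsub>M\<^esub> g i) A"
  using assms(2)
proof (induction A rule: infinite_finite_induct)
  case (insert x F)
  then show ?case
    using assms(1) by (simp add: M.finsum_insert smult_r_distr M.finsum_closed Pi_iff)
qed (simp_all add: assms(1))

lemma abelian_subgroup_mult_image:
  assumes r: "r \<in> carrier R"
  shows "abelian_subgroup (mult_image M r) M"
proof (rule abelian_subgroupI3[OF additive_subgroupI M.abelian_group_axioms])
  show "subgroup (mult_image M r) (add_monoid M)"
  proof
    show "mult_image M r \<subseteq> carrier (add_monoid M)"
      using r by (auto simp: mult_image_def)
    show "\<one>\<^bsub>add_monoid M\<^esub> \<in> mult_image M r"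
      using r by (auto simp: mult_image_def intro!: image_eqI[of _ _ "\<zero>\<^bsub>M\<^esub>"])
  next
    fix x y assume "x \<in> mult_image M r" "y \<in> mult_image M r"
    then show "x \<otimes>\<^bsub>add_monoid M\<^esub> y \<in> mult_image M r"
      using r by (auto simp: mult_image_def smult_r_distr[symmetric] intro!: image_eqI)
  next
    fix x assume "x \<in> mult_image M r"
    then show "inv\<^bsub>add_monoid M\<^esub> x \<in> mult_image M r"
      using r by (auto simp: mult_image_def smult_minus_right[symmetric] a_inv_def[symmetric]
          intro!: image_eqI)
  qed
qed

text \<open>The basis coefficients of \<open>r \<odot> h\<close> are \<open>r\<close> times those of \<open>h\<close>.\<close>

lemma free_smult_eq_zero:
  assumes free: "free_finite_rank R M" and r: "r \<in> carrier R"
    and r_nzd: "\<And>g. g \<in> carrier R \<Longrightarrow> r \<otimes>\<^bsub>R\<^esub> g = \<zero>\<^bsub>R\<^esub> \<Longrightarrow> g = \<zero>\<^bsub>R\<^esub>"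
    and h: "h \<in> carrier M" and rh: "r \<odot>\<^bsub>M\<^esub> h = \<zero>\<^bsub>M\<^esub>"
  shows "h = \<zero>\<^bsub>M\<^esub>"
proof -
  obtain B where B: "finite B" "B \<subseteq> carrier M"
    and unique: "\<forall>m\<in>carrier M.
      \<exists>!c. c \<in> B \<rightarrow>\<^sub>E carrier R \<and> m = finsum M (\<lambda>b. c b \<odot>\<^bsub>M\<^esub> b) B"
    using free unfolding free_finite_rank_def by (elim exE conjE)
  obtain c where c: "c \<in> B \<rightarrow>\<^sub>E carrier R" and hc: "h = finsum M (\<lambda>b. c b \<odot>\<^bsub>M\<^esub> b) B"
    using unique h by blast
  let ?rc = "\<lambda>b\<in>B. r \<otimes>\<^bsub>R\<^esub> c b" and ?zero = "\<lambda>b\<in>B. \<zero>\<^bsub>R\<^esub>"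
  have "\<zero>\<^bsub>M\<^esub> = finsum M (\<lambda>b. r \<odot>\<^bsub>M\<^esub> (c b \<odot>\<^bsub>M\<^esub> b)) B"
    using rh c B r by (simp add: hc smult_finsum PiE_iff subset_iff)
  also have "\<dots> = finsum M (\<lambda>b. ?rc b \<odot>\<^bsub>M\<^esub> b) B"
    using c B r by (intro M.finsum_cong') (auto simp: smult_assoc PiE_iff)
  finally have "\<zero>\<^bsub>M\<^esub> = finsum M (\<lambda>b. ?rc b \<odot>\<^bsub>M\<^esub> b) B" .
  moreover have "finsum M (\<lambda>b. ?zero b \<odot>\<^bsub>M\<^esub> b) B = finsum M (\<lambda>_. \<zero>\<^bsub>M\<^esub>) B"
    using B by (intro M.finsum_cong') auto
  then have "\<zero>\<^bsub>M\<^esub> = finsum M (\<lambda>b. ?zero b \<odot>\<^bsub>M\<^esub> b) B" by simp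
  moreover have "?rc \<in> B \<rightarrow>\<^sub>E carrier R" "?zero \<in> B \<rightarrow>\<^sub>E carrier R"
    using c r by (auto simp: PiE_iff)
  ultimately have "?rc = ?zero" using unique M.zero_closed by blast
  then have "c b = \<zero>\<^bsub>R\<^esub>" if "b \<in> B" for b
    using r_nzd c that by (metis (no_types, lifting) PiE_mem restrict_apply')
  then have "finsum M (\<lambda>b. c b \<odot>\<^bsub>M\<^esub> b) B = finsum M (\<lambda>_. \<zero>\<^bsub>M\<^esub>) B"
    using B by (intro M.finsum_cong') auto
  then show ?thesis by (simp add: hc)
qed

lemma free_smult_inj:
  assumes free: "free_finite_rank R M" and r: "r \<in> carrier R"
    and r_nzd: "\<And>g. g \<in> carrier R \<Longrightarrow> r \<otimes>\<^bsub>R\<^esub> g = \<zero>\<^bsub>R\<^esub> \<Longrightarrow> g = \<zero>\<^bsub>R\<^esub>"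
    and x: "x \<in> carrier M" and y: "y \<in> carrier M" and eq: "r \<odot>\<^bsub>M\<^esub> x = r \<odot>\<^bsub>M\<^esub> y"
  shows "x = y"
proof -
  have "r \<odot>\<^bsub>M\<^esub> (x \<ominus>\<^bsub>M\<^esub> y) = r \<odot>\<^bsub>M\<^esub> y \<ominus>\<^bsub>M\<^esub> r \<odot>\<^bsub>M\<^esub> y"
    using x y r eq by (simp add: smult_diff_right)
  also have "\<dots> = \<zero>\<^bsub>M\<^esub>"
    using y r by (simp add: M.minus_eq M.r_neg)
  finally have "x \<ominus>\<^bsub>M\<^esub> y = \<zero>\<^bsub>M\<^esub>"
    using free_smult_eq_zero[OF free r r_nzd, of "x \<ominus>\<^bsub>M\<^esub> y"] x y by blast
  then show ?thesis
    using x y by (simp add: M.minus_eq M.add.inv_solve_right')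
qed

end

lemma quot_mod_eq_image: "quot_mod M r = (\<lambda>x. mult_image M r +>\<^bsub>M\<^esub> x) ` carrier M"
  by (auto simp: quot_mod_def A_RCOSETS_def')

locale left_mod_hom = dom: left_mod R M + cod: left_mod R N
  for R :: "('r, 'x) ring_scheme" and M :: "('r, 'm) module" and N :: "('r, 'n) module" +
  fixes f :: "'m \<Rightarrow> 'n"
  assumes hom: "f \<in> left_module_hom R M N"
begin

lemma f_closed [simp, intro]: "x \<in> carrier M \<Longrightarrow> f x \<in> carrier N"
  and f_add: "x \<in> carrier M \<Longrightarrow> y \<in> carrier M \<Longrightarrow> f (x \<oplus>\<^bsub>M\<^esub> y) = f x \<oplus>\<^bsub>N\<^esub> f y"
  and f_smult: "a \<in> carrier R \<Longrightarrow> x \<in> carrier M \<Longrightarrow> f (a \<odot>\<^bsub>M\<^esub> x) = a \<odot>\<^bsub>N\<^esub> f x"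
  using hom by (auto simp: left_module_hom_def)

lemma f_zero [simp]: "f \<zero>\<^bsub>M\<^esub> = \<zero>\<^bsub>N\<^esub>"
  using f_smult[of "\<zero>\<^bsub>R\<^esub>" "\<zero>\<^bsub>M\<^esub>"] by simp

lemma f_diff: "x \<in> carrier M \<Longrightarrow> y \<in> carrier M \<Longrightarrow> f (x \<ominus>\<^bsub>M\<^esub> y) = f x \<ominus>\<^bsub>N\<^esub> f y"
  using f_smult[of "\<ominus>\<^bsub>R\<^esub> \<one>\<^bsub>R\<^esub>" y]
  by (simp add: a_minus_def f_add dom.smult_minus_left cod.smult_minus_left)

lemma f_mult_image: "r \<in> carrier R \<Longrightarrow> x \<in> mult_image M r \<Longrightarrow> f x \<in> mult_image N r"
  by (auto simp: mult_image_def f_smult)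

lemma map_mod_coset:
  assumes r: "r \<in> carrier R" and x: "x \<in> carrier M"
  shows "map_mod M N f r (mult_image M r +>\<^bsub>M\<^esub> x) = mult_image N r +>\<^bsub>N\<^esub> f x"
proof -
  interpret rM: abelian_subgroup "mult_image M r" M by (rule dom.abelian_subgroup_mult_image[OF r])
  interpret rN: abelian_subgroup "mult_image N r" N by (rule cod.abelian_subgroup_mult_image[OF r])
  define h where "h = (SOME h. h \<in> mult_image M r +>\<^bsub>M\<^esub> x)"
  have h: "h \<in> carrier M" "h \<ominus>\<^bsub>M\<^esub> x \<in> mult_image M r"
    unfolding h_def using rM.some_in_a_rcos[OF x] by auto
  then have "f h \<ominus>\<^bsub>N\<^esub> f x \<in> mult_image N r"
    using x r f_mult_image by (simp flip: f_diff)
  then show ?thesis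
    unfolding map_mod_def h_def[symmetric] using h x by (simp add: rN.a_rcos_eq_iff)
qed

lemma ker_map_mod_eq:
  assumes r: "r \<in> carrier R"
  shows "ker_map_mod M N f r = (\<lambda>x. mult_image M r +>\<^bsub>M\<^esub> x) ` {x \<in> carrier M. f x \<in> mult_image N r}"
proof -
  interpret rN: abelian_subgroup "mult_image N r" N by (rule cod.abelian_subgroup_mult_image[OF r])
  have "map_mod M N f r (mult_image M r +>\<^bsub>M\<^esub> x) = mult_image N r \<longleftrightarrow> f x \<in> mult_image N r"
    if "x \<in> carrier M" for x
    using that by (simp add: map_mod_coset[OF r] rN.a_rcos_eq_self_iff)
  then show ?thesis
    unfolding ker_map_mod_def quot_mod_eq_image by blast
qed

lemma inj_on_map_mod_iff:
  assumes r: "r \<in> carrier R"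
  shows "inj_on (map_mod M N f r) (quot_mod M r)
    \<longleftrightarrow> (\<forall>x\<in>carrier M. f x \<in> mult_image N r \<longrightarrow> x \<in> mult_image M r)"
proof -
  interpret rM: abelian_subgroup "mult_image M r" M by (rule dom.abelian_subgroup_mult_image[OF r])
  interpret rN: abelian_subgroup "mult_image N r" N by (rule cod.abelian_subgroup_mult_image[OF r])
  show ?thesis
  proof (intro iffI ballI impI)
    fix x assume inj: "inj_on (map_mod M N f r) (quot_mod M r)"
      and x: "x \<in> carrier M" and fx: "f x \<in> mult_image N r"
    have "map_mod M N f r (mult_image M r +>\<^bsub>M\<^esub> x)
        = map_mod M N f r (mult_image M r +>\<^bsub>M\<^esub> \<zero>\<^bsub>M\<^esub>)"
      using x fx map_mod_coset[OF r dom.M.zero_closed] rN.a_subset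
      by (simp add: map_mod_coset[OF r] rN.a_rcos_eq_self_iff)
    then have "mult_image M r +>\<^bsub>M\<^esub> x = mult_image M r +>\<^bsub>M\<^esub> \<zero>\<^bsub>M\<^esub>"
      using x by (elim inj_onD[OF inj]) (auto simp: quot_mod_eq_image)
    then show "x \<in> mult_image M r"
      using x rM.a_subset by (simp add: rM.a_rcos_eq_self_iff)
  next
    assume H: "\<forall>x\<in>carrier M. f x \<in> mult_image N r \<longrightarrow> x \<in> mult_image M r"
    show "inj_on (map_mod M N f r) (quot_mod M r)"
    proof (rule inj_onI)
      fix C C' assume "C \<in> quot_mod M r" "C' \<in> quot_mod M r"
        and eq: "map_mod M N f r C = map_mod M N f r C'"
      then obtain x x' where x: "x \<in> carrier M" "C = mult_image M r +>\<^bsub>M\<^esub> x"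
        and x': "x' \<in> carrier M" "C' = mult_image M r +>\<^bsub>M\<^esub> x'"
        by (auto simp: quot_mod_eq_image)
      then have "f (x \<ominus>\<^bsub>M\<^esub> x') \<in> mult_image N r"
        using eq by (simp add: map_mod_coset[OF r] rN.a_rcos_eq_iff f_diff)
      then show "C = C'"
        using H x x' by (simp add: rM.a_rcos_eq_iff)
    qed
  qed
qed

lemma map_mod_image_eq_iff:
  assumes r: "r \<in> carrier R"
  shows "map_mod M N f r ` quot_mod M r = quot_mod N r
    \<longleftrightarrow> (\<forall>h\<in>carrier N. \<exists>x\<in>carrier M. h \<ominus>\<^bsub>N\<^esub> f x \<in> mult_image N r)"
proof -
  interpret rN: abelian_subgroup "mult_image N r" N by (rule cod.abelian_subgroup_mult_image[OF r])
  have image: "map_mod M N f r ` quot_mod M r = (\<lambda>x. mult_image N r +>\<^bsub>N\<^esub> f x) ` carrier M"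
    unfolding quot_mod_eq_image image_image by (intro image_cong) (simp_all add: map_mod_coset[OF r])
  show ?thesis
  proof
    assume eq: "map_mod M N f r ` quot_mod M r = quot_mod N r"
    show "\<forall>h\<in>carrier N. \<exists>x\<in>carrier M. h \<ominus>\<^bsub>N\<^esub> f x \<in> mult_image N r"
    proof
      fix h assume h: "h \<in> carrier N"
      then have "mult_image N r +>\<^bsub>N\<^esub> h \<in> quot_mod N r"
        by (simp add: quot_mod_eq_image)
      then have "mult_image N r +>\<^bsub>N\<^esub> h \<in> (\<lambda>x. mult_image N r +>\<^bsub>N\<^esub> f x) ` carrier M"
        using eq image by simp
      then show "\<exists>x\<in>carrier M. h \<ominus>\<^bsub>N\<^esub> f x \<in> mult_image N r"
        using h by (auto simp: rN.a_rcos_eq_iff)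
    qed
  next
    assume H: "\<forall>h\<in>carrier N. \<exists>x\<in>carrier M. h \<ominus>\<^bsub>N\<^esub> f x \<in> mult_image N r"
    show "map_mod M N f r ` quot_mod M r = quot_mod N r"
    proof
      show "map_mod M N f r ` quot_mod M r \<subseteq> quot_mod N r"
        by (auto simp: quot_mod_eq_image map_mod_coset[OF r])
      show "quot_mod N r \<subseteq> map_mod M N f r ` quot_mod M r"
      proof
        fix D assume "D \<in> quot_mod N r"
        then obtain h where h: "h \<in> carrier N" "D = mult_image N r +>\<^bsub>N\<^esub> h"
          by (auto simp: quot_mod_eq_image)
        then obtain x where "x \<in> carrier M" "h \<ominus>\<^bsub>N\<^esub> f x \<in> mult_image N r"
          using H by blast
        then have "x \<in> carrier M" "D = mult_image N r +>\<^bsub>N\<^esub> f x"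
          using h by (simp_all add: rN.a_rcos_eq_iff)
        then show "D \<in> map_mod M N f r ` quot_mod M r"
          unfolding image by blast
      qed
    qed
  qed
qed

end

section \<open>Coordinates on the cokernel\<close>

text \<open>The classes of \<open>v 0, \<dots>, v (n - 1)\<close> form a \<open>kbar\<close>-basis of \<open>coker f = H1 / f H0\<close>;
  \<open>coord h\<close> below is the coordinate vector of the class of \<open>h\<close> and \<open>lift a\<close> a representative of the
  class with coordinates \<open>a\<close>.\<close>

locale coker_coords =
  alg_closed_frobenius q phi + left_mod_hom "skew_poly_ring q" H0 H1 f
  for q :: nat and phi :: "'a::field \<Rightarrow> 'a"
    and H0 :: "(nat \<Rightarrow> 'a, 'm) module" and H1 :: "(nat \<Rightarrow> 'a, 'n) module" and f +
  fixes n :: nat and v :: "nat \<Rightarrow> 'n"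
  assumes f_inj: "inj_on f (carrier H0)"
    and free_H1: "free_finite_rank (skew_poly_ring q) H1"
    and v_closed: "\<And>i. i < n \<Longrightarrow> v i \<in> carrier H1"
    and v_spans: "\<And>h. h \<in> carrier H1 \<Longrightarrow> \<exists>a. \<exists>x\<in>carrier H0.
      h = f x \<oplus>\<^bsub>H1\<^esub> finsum H1 (\<lambda>i. skew_const (a i) \<odot>\<^bsub>H1\<^esub> v i) {..<n}"
    and v_indep: "\<And>a i. finsum H1 (\<lambda>i. skew_const (a i) \<odot>\<^bsub>H1\<^esub> v i) {..<n} \<in> f ` carrier H0
      \<Longrightarrow> i < n \<Longrightarrow> a i = 0"
begin

definition lift :: "(nat \<Rightarrow> 'a) \<Rightarrow> 'n" where
  "lift a = finsum H1 (\<lambda>i. skew_const (a i) \<odot>\<^bsub>H1\<^esub> v i) {..<n}"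

lemma lift_summands: "(\<lambda>i. skew_const (a i) \<odot>\<^bsub>H1\<^esub> v i) \<in> {..<n} \<rightarrow> carrier H1"
  using v_closed by auto

lemma lift_closed [simp]: "lift a \<in> carrier H1"
  unfolding lift_def using lift_summands by (rule cod.M.finsum_closed)

lemma lift_cong: "(\<And>i. i < n \<Longrightarrow> a i = b i) \<Longrightarrow> lift a = lift b"
  unfolding lift_def by (intro cod.M.finsum_cong'[OF refl lift_summands]) auto

lemma lift_add: "lift (a + b) = lift a \<oplus>\<^bsub>H1\<^esub> lift b"
proof -
  have "lift (a + b) = finsum H1 (\<lambda>i. skew_const (a i) \<odot>\<^bsub>H1\<^esub> v i \<oplus>\<^bsub>H1\<^esub> skew_const (b i) \<odot>\<^bsub>H1\<^esub> v i) {..<n}"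
    unfolding lift_def using v_closed
    by (intro cod.M.finsum_cong') (auto simp: skew_const_add[symmetric, of "a _" "b _" q] cod.smult_l_distr)
  also have "\<dots> = lift a \<oplus>\<^bsub>H1\<^esub> lift b"
    unfolding lift_def using lift_summands by (intro cod.M.finsum_addf) auto
  finally show ?thesis .
qed

lemma lift_vscale: "lift (vscale c a) = skew_const c \<odot>\<^bsub>H1\<^esub> lift a"
proof -
  have "skew_const c \<odot>\<^bsub>H1\<^esub> lift a
      = finsum H1 (\<lambda>i. skew_const c \<odot>\<^bsub>H1\<^esub> (skew_const (a i) \<odot>\<^bsub>H1\<^esub> v i)) {..<n}"
    unfolding lift_def by (rule cod.smult_finsum[OF skew_const_carrier lift_summands])
  also have "\<dots> = lift (vscale c a)"
    unfolding lift_def using v_closed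
    by (intro cod.M.finsum_cong')
      (auto simp: vscale_apply cod.smult_assoc[symmetric] skew_const_mult_const)
  finally show ?thesis by simp
qed

lemma lift_zero [simp]: "lift 0 = \<zero>\<^bsub>H1\<^esub>"
  using lift_vscale[of 0 0] by (simp add: skew_const_0[of q] vscale_def zero_fun_def)

lemma lift_diff: "lift (a - b) = lift a \<ominus>\<^bsub>H1\<^esub> lift b"
  using lift_add[of "a - b" b] by (simp add: a_minus_def cod.M.add.inv_solve_right)

lemma lift_eq_f_imp_zero:
  assumes "a \<in> coord_space n" "x \<in> carrier H0" "lift a = f x"
  shows "a = 0"
proof
  fix i
  show "a i = 0 i"
    using assms v_indep[of a i] by (cases "i < n") (auto simp: lift_def coord_space_def)
qed

definition coord :: "'n \<Rightarrow> nat \<Rightarrow> 'a" where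
  "coord h = (THE a. a \<in> coord_space n \<and> (\<exists>x\<in>carrier H0. h = f x \<oplus>\<^bsub>H1\<^esub> lift a))"

lemma coord_eqI:
  assumes a: "a \<in> coord_space n" and x: "x \<in> carrier H0" and h: "h = f x \<oplus>\<^bsub>H1\<^esub> lift a"
  shows "coord h = a"
  unfolding coord_def
proof (rule the_equality)
  fix b assume b: "b \<in> coord_space n \<and> (\<exists>y\<in>carrier H0. h = f y \<oplus>\<^bsub>H1\<^esub> lift b)"
  then obtain y where y: "y \<in> carrier H0" "f y \<oplus>\<^bsub>H1\<^esub> lift b = f x \<oplus>\<^bsub>H1\<^esub> lift a"
    using h by blast
  then have "lift (b - a) = f (x \<ominus>\<^bsub>H0\<^esub> y)"
    using x by (simp add: lift_diff f_diff cod.M.add_eq_add_imp_diff_eq)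
  then have "b - a = 0"
    using a b x y by (intro lift_eq_f_imp_zero) auto
  then show "b = a" by simp
qed (use a x h in blast)

lemma coord:
  assumes "h \<in> carrier H1"
  shows "coord h \<in> coord_space n" "\<exists>x\<in>carrier H0. h = f x \<oplus>\<^bsub>H1\<^esub> lift (coord h)"
proof -
  obtain a x where x: "x \<in> carrier H0" and h: "h = f x \<oplus>\<^bsub>H1\<^esub> lift a"
    using v_spans[OF assms] lift_def by auto
  let ?a = "\<lambda>i. if i < n then a i else 0"
  have "?a \<in> coord_space n" by (simp add: coord_space_def)
  moreover have "h = f x \<oplus>\<^bsub>H1\<^esub> lift ?a"
    using h lift_cong[of ?a a] by simp
  ultimately show "coord h \<in> coord_space n" "\<exists>x\<in>carrier H0. h = f x \<oplus>\<^bsub>H1\<^esub> lift (coord h)"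
    using coord_eqI x by auto
qed

lemma coord_f [simp]: "x \<in> carrier H0 \<Longrightarrow> coord (f x) = 0"
  by (rule coord_eqI) auto

lemma coord_lift [simp]: "a \<in> coord_space n \<Longrightarrow> coord (lift a) = a"
  by (rule coord_eqI[where x = "\<zero>\<^bsub>H0\<^esub>"]) auto

lemma coord_add:
  assumes "h \<in> carrier H1" "h' \<in> carrier H1"
  shows "coord (h \<oplus>\<^bsub>H1\<^esub> h') = coord h + coord h'"
proof -
  obtain x x' where x: "x \<in> carrier H0" "h = f x \<oplus>\<^bsub>H1\<^esub> lift (coord h)"
    and x': "x' \<in> carrier H0" "h' = f x' \<oplus>\<^bsub>H1\<^esub> lift (coord h')"
    using coord(2) assms by blast
  have "h \<oplus>\<^bsub>H1\<^esub> h'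
      = (f x \<oplus>\<^bsub>H1\<^esub> lift (coord h)) \<oplus>\<^bsub>H1\<^esub> (f x' \<oplus>\<^bsub>H1\<^esub> lift (coord h'))"
    using x(2) x'(2) by (rule arg_cong2)
  also have "\<dots> = f (x \<oplus>\<^bsub>H0\<^esub> x') \<oplus>\<^bsub>H1\<^esub> lift (coord h + coord h')"
    using x(1) x'(1) by (simp add: f_add lift_add cod.M.a_ac)
  finally show ?thesis
    using x x' coord(1) assms by (intro coord_eqI) auto
qed

lemma coord_diff:
  assumes "h \<in> carrier H1" "h' \<in> carrier H1"
  shows "coord (h \<ominus>\<^bsub>H1\<^esub> h') = coord h - coord h'"
  using coord_add[of "h \<ominus>\<^bsub>H1\<^esub> h'" h'] assms
  by (simp add: a_minus_def cod.M.a_assoc cod.M.l_neg eq_diff_eq)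

lemma coord_eq_0_iff: "h \<in> carrier H1 \<Longrightarrow> coord h = 0 \<longleftrightarrow> h \<in> f ` carrier H0"
  using coord(2) by fastforce

lemma coord_smult_const:
  assumes "h \<in> carrier H1"
  shows "coord (skew_const c \<odot>\<^bsub>H1\<^esub> h) = vscale c (coord h)"
proof -
  obtain x where x: "x \<in> carrier H0" "h = f x \<oplus>\<^bsub>H1\<^esub> lift (coord h)"
    using coord(2) assms by blast
  then have "skew_const c \<odot>\<^bsub>H1\<^esub> h
      = skew_const c \<odot>\<^bsub>H1\<^esub> (f x \<oplus>\<^bsub>H1\<^esub> lift (coord h))"
    by simp
  also have "\<dots> = f (skew_const c \<odot>\<^bsub>H0\<^esub> x) \<oplus>\<^bsub>H1\<^esub> lift (vscale c (coord h))"
    using x(1) by (simp add: cod.smult_r_distr f_smult lift_vscale)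
  finally have "skew_const c \<odot>\<^bsub>H1\<^esub> h
      = f (skew_const c \<odot>\<^bsub>H0\<^esub> x) \<oplus>\<^bsub>H1\<^esub> lift (vscale c (coord h))" .
  then show ?thesis
    using x coord(1)[OF assms] by (intro coord_eqI) auto
qed

definition S :: "(nat \<Rightarrow> 'a) \<Rightarrow> nat \<Rightarrow> 'a" where
  "S a = coord (skew_sigma \<odot>\<^bsub>H1\<^esub> lift a)"

lemma coord_sigma:
  assumes "h \<in> carrier H1"
  shows "coord (skew_sigma \<odot>\<^bsub>H1\<^esub> h) = S (coord h)"
proof -
  obtain x where x: "x \<in> carrier H0" "h = f x \<oplus>\<^bsub>H1\<^esub> lift (coord h)"
    using coord(2) assms by blast
  then have "skew_sigma \<odot>\<^bsub>H1\<^esub> h = skew_sigma \<odot>\<^bsub>H1\<^esub> (f x \<oplus>\<^bsub>H1\<^esub> lift (coord h))"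
    by simp
  also have "\<dots> = f (skew_sigma \<odot>\<^bsub>H0\<^esub> x) \<oplus>\<^bsub>H1\<^esub> skew_sigma \<odot>\<^bsub>H1\<^esub> lift (coord h)"
    using x(1) by (simp add: cod.smult_r_distr f_smult)
  finally show ?thesis
    using x(1) by (simp add: coord_add S_def)
qed

sublocale frob_semilinear q phi n S
proof
  fix a b :: "nat \<Rightarrow> 'a" and c :: 'a
  show "S a \<in> coord_space n" by (simp add: S_def coord)
  show "S (a + b) = S a + S b"
    by (simp add: S_def lift_add cod.smult_r_distr coord_add)
  have "skew_sigma \<odot>\<^bsub>H1\<^esub> lift (vscale c a) = skew_const (phi c) \<odot>\<^bsub>H1\<^esub> (skew_sigma \<odot>\<^bsub>H1\<^esub> lift a)"
    by (simp add: lift_vscale skew_sigma_const flip: cod.smult_assoc)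
  then show "S (vscale c a) = vscale (phi c) (S a)"
    by (simp add: S_def coord_smult_const)
qed

abbreviation sigma_minus_one :: "nat \<Rightarrow> 'a" where
  "sigma_minus_one \<equiv> skew_sigma \<ominus>\<^bsub>skew_poly_ring q\<^esub> \<one>\<^bsub>skew_poly_ring q\<^esub>"

lemma sigma_minus_one_carrier [simp]: "sigma_minus_one \<in> carrier (skew_poly_ring q)"
  by simp

lemma sigma_minus_one_smult:
  "h \<in> carrier H1 \<Longrightarrow> sigma_minus_one \<odot>\<^bsub>H1\<^esub> h = skew_sigma \<odot>\<^bsub>H1\<^esub> h \<ominus>\<^bsub>H1\<^esub> h"
  by (simp add: cod.smult_diff_left)

lemma sigma_minus_one_smult_inj:
  assumes "h \<in> carrier H1" "h' \<in> carrier H1"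
    and "sigma_minus_one \<odot>\<^bsub>H1\<^esub> h = sigma_minus_one \<odot>\<^bsub>H1\<^esub> h'"
  shows "h = h'"
proof (rule cod.free_smult_inj[OF free_H1 sigma_minus_one_carrier _ assms])
  fix g assume g: "g \<in> carrier (skew_poly_ring q)"
    and "sigma_minus_one \<otimes>\<^bsub>skew_poly_ring q\<^esub> g = \<zero>\<^bsub>skew_poly_ring q\<^esub>"
  then have "skew_sigma \<otimes>\<^bsub>skew_poly_ring q\<^esub> g \<oplus>\<^bsub>skew_poly_ring q\<^esub> \<ominus>\<^bsub>skew_poly_ring q\<^esub> g
      = \<zero>\<^bsub>skew_poly_ring q\<^esub>"
    by (simp add: a_minus_def dom.R.l_distr dom.R.l_minus)
  then have "skew_sigma \<otimes>\<^bsub>skew_poly_ring q\<^esub> g = g"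
    using g by (simp add: dom.R.add.inv_solve_right')
  then show "g = \<zero>\<^bsub>skew_poly_ring q\<^esub>"
    by (rule skew_sigma_mult_eq_self)
qed

lemma sigma_smult_inj:
  assumes "h \<in> carrier H1" "h' \<in> carrier H1"
    and "skew_sigma \<odot>\<^bsub>H1\<^esub> h = skew_sigma \<odot>\<^bsub>H1\<^esub> h'"
  shows "h = h'"
  using skew_sigma_mult_eq_zero by (intro cod.free_smult_inj[OF free_H1 _ _ assms]) auto

lemma coord_sigma_minus_one:
  "h \<in> carrier H1 \<Longrightarrow> coord (sigma_minus_one \<odot>\<^bsub>H1\<^esub> h) = S (coord h) - coord h"
  by (simp add: sigma_minus_one_smult coord_diff coord_sigma)

definition fixed_point_lift :: "(nat \<Rightarrow> 'a) \<Rightarrow> 'm" where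
  "fixed_point_lift a = (SOME x. x \<in> carrier H0 \<and> f x = sigma_minus_one \<odot>\<^bsub>H1\<^esub> lift a)"

lemma fixed_point_lift:
  assumes "a \<in> fixed_points"
  shows "fixed_point_lift a \<in> carrier H0"
    "f (fixed_point_lift a) = sigma_minus_one \<odot>\<^bsub>H1\<^esub> lift a"
proof -
  have "coord (sigma_minus_one \<odot>\<^bsub>H1\<^esub> lift a) = 0"
    using assms by (simp add: coord_sigma_minus_one fixed_points_def)
  then have "\<exists>x. x \<in> carrier H0 \<and> f x = sigma_minus_one \<odot>\<^bsub>H1\<^esub> lift a"
    by (auto simp: coord_eq_0_iff)
  then have "fixed_point_lift a \<in> carrier H0 \<and> f (fixed_point_lift a) = sigma_minus_one \<odot>\<^bsub>H1\<^esub> lift a"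
    unfolding fixed_point_lift_def by (rule someI_ex)
  then show "fixed_point_lift a \<in> carrier H0"
    "f (fixed_point_lift a) = sigma_minus_one \<odot>\<^bsub>H1\<^esub> lift a" by auto
qed

definition fixed_point_class :: "(nat \<Rightarrow> 'a) \<Rightarrow> 'm set" where
  "fixed_point_class a = mult_image H0 sigma_minus_one +>\<^bsub>H0\<^esub> fixed_point_lift a"

lemma inj_on_fixed_point_class: "inj_on fixed_point_class fixed_points"
proof (rule inj_onI)
  interpret rH0: abelian_subgroup "mult_image H0 sigma_minus_one" H0
    by (rule dom.abelian_subgroup_mult_image) simp
  let ?xa = fixed_point_lift
  fix a b assume a: "a \<in> fixed_points" and b: "b \<in> fixed_points"
    and "fixed_point_class a = fixed_point_class b"
  then have "?xa a \<ominus>\<^bsub>H0\<^esub> ?xa b \<in> mult_image H0 sigma_minus_one"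
    using fixed_point_lift by (simp add: fixed_point_class_def rH0.a_rcos_eq_iff)
  then obtain y where y: "y \<in> carrier H0" "?xa a \<ominus>\<^bsub>H0\<^esub> ?xa b = sigma_minus_one \<odot>\<^bsub>H0\<^esub> y"
    by (auto simp: mult_image_def)
  have "sigma_minus_one \<odot>\<^bsub>H1\<^esub> lift (a - b) = f (?xa a) \<ominus>\<^bsub>H1\<^esub> f (?xa b)"
    using a b fixed_point_lift by (simp add: lift_diff cod.smult_diff_right)
  also have "\<dots> = f (?xa a \<ominus>\<^bsub>H0\<^esub> ?xa b)"
    using a b fixed_point_lift by (simp add: f_diff)
  also have "\<dots> = sigma_minus_one \<odot>\<^bsub>H1\<^esub> f y"
    using y by (simp add: f_smult)
  finally have "lift (a - b) = f y"
    by (rule sigma_minus_one_smult_inj[OF lift_closed f_closed[OF y(1)]])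
  then have "a - b = 0"
    using a b y(1) by (intro lift_eq_f_imp_zero) (auto simp: fixed_points_def)
  then show "a = b" by simp
qed

lemma fixed_point_class_image:
  "fixed_point_class ` fixed_points = ker_map_mod H0 H1 f sigma_minus_one"
proof -
  interpret rH0: abelian_subgroup "mult_image H0 sigma_minus_one" H0
    by (rule dom.abelian_subgroup_mult_image) simp
  let ?xa = fixed_point_lift
  show ?thesis
    unfolding ker_map_mod_eq[OF sigma_minus_one_carrier]
  proof (intro equalityI subsetI)
    fix C assume "C \<in> fixed_point_class ` fixed_points"
    then show "C \<in> (\<lambda>x. mult_image H0 sigma_minus_one +>\<^bsub>H0\<^esub> x) `
        {x \<in> carrier H0. f x \<in> mult_image H1 sigma_minus_one}"
      using fixed_point_lift by (auto simp: fixed_point_class_def mult_image_def)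
  next
    fix C assume "C \<in> (\<lambda>x. mult_image H0 sigma_minus_one +>\<^bsub>H0\<^esub> x) `
        {x \<in> carrier H0. f x \<in> mult_image H1 sigma_minus_one}"
    then obtain x h where x: "x \<in> carrier H0" "C = mult_image H0 sigma_minus_one +>\<^bsub>H0\<^esub> x"
      and h: "h \<in> carrier H1" "f x = sigma_minus_one \<odot>\<^bsub>H1\<^esub> h"
      by (auto simp: mult_image_def)
    obtain y where y: "y \<in> carrier H0" "h = f y \<oplus>\<^bsub>H1\<^esub> lift (coord h)"
      using coord(2)[OF h(1)] by blast
    have a: "coord h \<in> fixed_points"
      using coord_sigma_minus_one[OF h(1)] h(2)[symmetric] x(1) coord(1)[OF h(1)]
      by (simp add: fixed_points_def)
    have "f x = sigma_minus_one \<odot>\<^bsub>H1\<^esub> (f y \<oplus>\<^bsub>H1\<^esub> lift (coord h))"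
      using h(2) y(2) by simp
    also have "\<dots> = f (sigma_minus_one \<odot>\<^bsub>H0\<^esub> y \<oplus>\<^bsub>H0\<^esub> ?xa (coord h))"
      using y(1) fixed_point_lift[OF a] by (simp add: cod.smult_r_distr f_add f_smult)
    finally have "x = sigma_minus_one \<odot>\<^bsub>H0\<^esub> y \<oplus>\<^bsub>H0\<^esub> ?xa (coord h)"
      using f_inj x(1) y(1) fixed_point_lift[OF a] by (auto dest: inj_onD)
    then have "x \<ominus>\<^bsub>H0\<^esub> ?xa (coord h) = sigma_minus_one \<odot>\<^bsub>H0\<^esub> y"
      using y(1) fixed_point_lift[OF a] by (simp add: dom.M.minus_eq dom.M.add.inv_solve_right')
    then have "x \<ominus>\<^bsub>H0\<^esub> ?xa (coord h) \<in> mult_image H0 sigma_minus_one"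
      using y(1) by (auto simp: mult_image_def)
    then have "C = fixed_point_class (coord h)"
      using x fixed_point_lift[OF a] by (simp add: fixed_point_class_def rH0.a_rcos_eq_iff)
    then show "C \<in> fixed_point_class ` fixed_points"
      using a by blast
  qed
qed

lemma reduction_mod_sigma_inj_iff:
  "(\<forall>x\<in>carrier H0. f x \<in> mult_image H1 skew_sigma \<longrightarrow> x \<in> mult_image H0 skew_sigma)
    \<longleftrightarrow> (\<forall>a\<in>V. S a = 0 \<longrightarrow> a = 0)"
proof (intro iffI ballI impI)
  fix a assume H: "\<forall>x\<in>carrier H0. f x \<in> mult_image H1 skew_sigma \<longrightarrow> x \<in> mult_image H0 skew_sigma"
    and a: "a \<in> V" and "S a = 0"
  then obtain z where z: "z \<in> carrier H0" "f z = skew_sigma \<odot>\<^bsub>H1\<^esub> lift a"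
    by (auto simp: S_def coord_eq_0_iff)
  then have "z \<in> mult_image H0 skew_sigma"
    using H by (auto simp: mult_image_def)
  then obtain y where y: "y \<in> carrier H0" "z = skew_sigma \<odot>\<^bsub>H0\<^esub> y"
    by (auto simp: mult_image_def)
  then have "skew_sigma \<odot>\<^bsub>H1\<^esub> lift a = skew_sigma \<odot>\<^bsub>H1\<^esub> f y"
    using z by (simp add: f_smult)
  then have "lift a = f y"
    by (rule sigma_smult_inj[OF lift_closed f_closed[OF y(1)]])
  then show "a = 0"
    using lift_eq_f_imp_zero a y(1) by blast
next
  fix x assume H: "\<forall>a\<in>V. S a = 0 \<longrightarrow> a = 0"
    and x: "x \<in> carrier H0" and "f x \<in> mult_image H1 skew_sigma"
  then obtain h where h: "h \<in> carrier H1" "f x = skew_sigma \<odot>\<^bsub>H1\<^esub> h"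
    by (auto simp: mult_image_def)
  then have "S (coord h) = 0"
    using x coord_sigma[OF h(1)] h(2)[symmetric] by simp
  then have "coord h = 0"
    using H coord(1)[OF h(1)] by blast
  then obtain y where y: "y \<in> carrier H0" "h = f y"
    using h(1) by (auto simp: coord_eq_0_iff)
  then have "f x = f (skew_sigma \<odot>\<^bsub>H0\<^esub> y)"
    using h(2) by (simp add: f_smult)
  then have "x = skew_sigma \<odot>\<^bsub>H0\<^esub> y"
    using f_inj x y(1) by (auto dest: inj_onD)
  then show "x \<in> mult_image H0 skew_sigma"
    using y(1) by (auto simp: mult_image_def)
qed

lemma reduction_mod_sigma_surj_iff:
  "(\<forall>h\<in>carrier H1. \<exists>x\<in>carrier H0. h \<ominus>\<^bsub>H1\<^esub> f x \<in> mult_image H1 skew_sigma)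
    \<longleftrightarrow> (\<forall>b\<in>V. \<exists>a\<in>V. S a = b)"
proof (intro iffI ballI)
  fix b assume H: "\<forall>h\<in>carrier H1. \<exists>x\<in>carrier H0. h \<ominus>\<^bsub>H1\<^esub> f x \<in> mult_image H1 skew_sigma"
    and b: "b \<in> V"
  obtain x where x: "x \<in> carrier H0" "lift b \<ominus>\<^bsub>H1\<^esub> f x \<in> mult_image H1 skew_sigma"
    using H lift_closed by blast
  then obtain g where g: "g \<in> carrier H1"
    and eq: "lift b \<ominus>\<^bsub>H1\<^esub> f x = skew_sigma \<odot>\<^bsub>H1\<^esub> g"
    by (auto simp: mult_image_def)
  have "S (coord g) = b"
    using arg_cong[OF eq, of coord] x(1) g b by (simp add: coord_diff coord_sigma)
  then show "\<exists>a\<in>V. S a = b"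
    using coord(1)[OF g] by blast
next
  fix h assume H: "\<forall>b\<in>V. \<exists>a\<in>V. S a = b" and h: "h \<in> carrier H1"
  then obtain a where a: "a \<in> V" "S a = coord h"
    using coord(1) by blast
  then have "coord (h \<ominus>\<^bsub>H1\<^esub> skew_sigma \<odot>\<^bsub>H1\<^esub> lift a) = 0"
    using h by (simp add: coord_diff S_def)
  then obtain x where x: "x \<in> carrier H0" "h \<ominus>\<^bsub>H1\<^esub> skew_sigma \<odot>\<^bsub>H1\<^esub> lift a = f x"
    using h by (auto simp: coord_eq_0_iff)
  then have "h \<ominus>\<^bsub>H1\<^esub> f x = skew_sigma \<odot>\<^bsub>H1\<^esub> lift a"
    using h by (simp add: cod.M.minus_eq cod.M.add.inv_solve_right' cod.M.a_comm cod.M.r_neg1)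
  then have "h \<ominus>\<^bsub>H1\<^esub> f x \<in> mult_image H1 skew_sigma"
    by (auto simp: mult_image_def)
  then show "\<exists>x\<in>carrier H0. h \<ominus>\<^bsub>H1\<^esub> f x \<in> mult_image H1 skew_sigma"
    using x(1) by blast
qed

theorem card_ker_map_mod_sigma_minus_one:
  "finite (ker_map_mod H0 H1 f sigma_minus_one)
    \<and> card (ker_map_mod H0 H1 f sigma_minus_one) \<le> q ^ n
    \<and> (card (ker_map_mod H0 H1 f sigma_minus_one) = q ^ n
        \<longleftrightarrow> bij_betw (map_mod H0 H1 f skew_sigma) (quot_mod H0 skew_sigma) (quot_mod H1 skew_sigma))"
proof -
  have "bij_betw (map_mod H0 H1 f skew_sigma) (quot_mod H0 skew_sigma) (quot_mod H1 skew_sigma)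
      \<longleftrightarrow> (\<forall>a\<in>V. S a = 0 \<longrightarrow> a = 0) \<and> (\<forall>b\<in>V. \<exists>a\<in>V. S a = b)"
    by (simp add: bij_betw_def inj_on_map_mod_iff map_mod_image_eq_iff
        reduction_mod_sigma_inj_iff reduction_mod_sigma_surj_iff)
  then show ?thesis
    using card_image[OF inj_on_fixed_point_class] finite_imageI[of fixed_points fixed_point_class]
      card_fixed_points(1) card_fixed_points_le card_fixed_points_eq_iff
    by (simp add: fixed_point_class_image)
qed

end

theorem lemma4:
  fixes q :: nat and T :: "'a::field"
    and H0 :: "(nat \<Rightarrow> 'a, 'm) module" and H1 :: "(nat \<Rightarrow> 'a, 'n) module"
    and f :: "'m \<Rightarrow> 'n" and n :: nat
  assumes "is_alg_closure_of_FqT q T"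
    and "left_module (skew_poly_ring q) H0" and "left_module (skew_poly_ring q) H1"
    and "free_finite_rank (skew_poly_ring q) H0" and "free_finite_rank (skew_poly_ring q) H1"
    and "f \<in> left_module_hom (skew_poly_ring q) H0 H1" and "inj_on f (carrier H0)"
    and "coker_dim_eq q H0 H1 f n"
  shows "finite (ker_map_mod H0 H1 f (skew_sigma \<ominus>\<^bsub>skew_poly_ring q\<^esub> \<one>\<^bsub>skew_poly_ring q\<^esub>))
    \<and> card (ker_map_mod H0 H1 f (skew_sigma \<ominus>\<^bsub>skew_poly_ring q\<^esub> \<one>\<^bsub>skew_poly_ring q\<^esub>)) \<le> q ^ n
    \<and> (card (ker_map_mod H0 H1 f (skew_sigma \<ominus>\<^bsub>skew_poly_ring q\<^esub> \<one>\<^bsub>skew_poly_ring q\<^esub>)) = q ^ n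
        \<longleftrightarrow> bij_betw (map_mod H0 H1 f skew_sigma) (quot_mod H0 skew_sigma) (quot_mod H1 skew_sigma))"
proof -
  obtain v where "\<forall>i<n. v i \<in> carrier H1"
    and "\<forall>h\<in>carrier H1. \<exists>a. \<exists>x\<in>carrier H0.
      h = f x \<oplus>\<^bsub>H1\<^esub> finsum H1 (\<lambda>i. skew_const (a i) \<odot>\<^bsub>H1\<^esub> v i) {..<n}"
    and "\<forall>a. finsum H1 (\<lambda>i. skew_const (a i) \<odot>\<^bsub>H1\<^esub> v i) {..<n} \<in> f ` carrier H0
      \<longrightarrow> (\<forall>i<n. a i = 0)"
    using assms(8) unfolding coker_dim_eq_def by blast
  then interpret coker_coords q "frob_inv q" H0 H1 f n v
    using assms alg_closed_frobeniusI[OF assms(1)]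
    by (intro coker_coords.intro left_mod_hom.intro left_mod.intro coker_coords_axioms.intro
        left_mod_hom_axioms.intro) auto
  show ?thesis by (rule card_ker_map_mod_sigma_minus_one)
qed

end
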